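(* (a) Let $\{X_n\}$, $\{Y_n\}$ be sequences of mm-spaces $\square$-converging to $X$ and $Y$, and let $p_n\in[1,+\infty]$ converge to $p\in[1,+\infty]$. Then $X_n\times_{p_n}Y_n$ $\square$-converges to $X\times_pY$. (b) Let $\{X_n\}$ be a sequence of mm-spaces $\square$-converging to $X$, and let $F_n,F\colon[0,+\infty)\to[0,+\infty)$ be continuous metric preserving functions with $F_n\to F$ pointwise. Then $(X_n,F_n\circ d_{X_n},m_{X_n})$ $\square$-converges to $(X,F\circ d_X,m_X)$.
   Context: An mm-space is a triple $(X,d_X,m_X)$ with $(X,d_X)$ complete separable metric space and $m_X$ a Borel probability measure, up to mm-isomorphism. $X\times_pY:=(X\times Y,d_{F_p},m_X\otimes m_Y)$ with $F_p(s,t)=(s^p+t^p)^{1/p}$ ($p<\infty$), $F_\infty=\max$, $d_{F_p}((x,y),(x',y'))=F_p(d_X(x,x'),d_Y(y,y'))$. A function $F\colon[0,+\infty)\to[0,+\infty)$ is metric preserving if $F\circ d$ is a metric for every metric $d$. Box distance: with $I=[0,1)$, Lebesgue measure $\mathcal L^1$, parameters Borel $\varphi\colon I\to X$ with $\varphi_*\mathcal L^1=m_X$: $\square(X,Y)$ is the infimum of $\varepsilon\ge0$ such that there are parameters $\varphi,\psi$ and Borel $I_0\subset I$ with $\mathcal L^1(I_0)\ge1-\varepsilon$ and $|d_X(\varphi(s),\varphi(t))-d_Y(\psi(s),\psi(t))|\le\varepsilon$ for $s,t\in I_0$. *)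

theory Defs
  imports "HOL-Probability.Probability"
begin

text \<open>An mm-space is represented by a distance function d and a measure m whose
  space is the underlying set X: (X,d) is a complete separable metric space and
  m is a Borel probability measure on it.\<close>

definition mm_space :: "('a \<Rightarrow> 'a \<Rightarrow> real) \<Rightarrow> 'a measure \<Rightarrow> bool" where
  "mm_space d m \<longleftrightarrow>
     Metric_space (space m) d \<and>
     Metric_space.mcomplete (space m) d \<and>
     separable_space (Metric_space.mtopology (space m) d) \<and>
     sets m = sigma_sets (space m) {U. openin (Metric_space.mtopology (space m) d) U} \<and>
     prob_space m"

definition unitI :: "real measure" where
  "unitI = restrict_space lborel {0..<1}"

definition parameter :: "'a measure \<Rightarrow> (real \<Rightarrow> 'a) \<Rightarrow> bool" where
  "parameter m \<phi> \<longleftrightarrow> \<phi> \<in> measurable unitI m \<and> distr unitI m \<phi> = m"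

definition box ::
  "('a \<Rightarrow> 'a \<Rightarrow> real) \<Rightarrow> 'a measure \<Rightarrow> ('b \<Rightarrow> 'b \<Rightarrow> real) \<Rightarrow> 'b measure \<Rightarrow> real" where
  "box dX mX dY mY = Inf {\<epsilon>. 0 \<le> \<epsilon> \<and>
     (\<exists>\<phi> \<psi> I0. parameter mX \<phi> \<and> parameter mY \<psi> \<and> I0 \<in> sets unitI \<and>
        measure unitI I0 \<ge> 1 - \<epsilon> \<and>
        (\<forall>s\<in>I0. \<forall>t\<in>I0. \<bar>dX (\<phi> s) (\<phi> t) - dY (\<psi> s) (\<psi> t)\<bar> \<le> \<epsilon>))}"

definition Fp :: "ennreal \<Rightarrow> real \<Rightarrow> real \<Rightarrow> real" where
  "Fp p s t = (if p = \<infinity> then max s t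
               else (s powr enn2real p + t powr enn2real p) powr (1 / enn2real p))"

definition prod_dist :: "ennreal \<Rightarrow> ('a \<Rightarrow> 'a \<Rightarrow> real) \<Rightarrow> ('b \<Rightarrow> 'b \<Rightarrow> real)
    \<Rightarrow> ('a \<times> 'b) \<Rightarrow> ('a \<times> 'b) \<Rightarrow> real" where
  "prod_dist p dX dY z w = Fp p (dX (fst z) (fst w)) (dY (snd z) (snd w))"

text \<open>Since the metric
  axioms involve at most three points, it suffices (and is equivalent) to quantify
  over metrics on arbitrary subsets of a fixed infinite type; we use nat.\<close>
definition metric_preserving :: "(real \<Rightarrow> real) \<Rightarrow> bool" where
  "metric_preserving F \<longleftrightarrow>
     (\<forall>(S :: nat set) d. Metric_space S d \<longrightarrow> Metric_space S (\<lambda>x y. F (d x y)))"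

definition box_converges ::
  "(nat \<Rightarrow> ('a \<Rightarrow> 'a \<Rightarrow> real)) \<Rightarrow> (nat \<Rightarrow> 'a measure) \<Rightarrow> ('b \<Rightarrow> 'b \<Rightarrow> real) \<Rightarrow> 'b measure \<Rightarrow> bool" where
  "box_converges dn mn d m \<longleftrightarrow> (\<lambda>n. box (dn n) (mn n) d m) \<longlonglongrightarrow> 0"

end

theory Submission
  imports Defs
begin

text \<open>Both parts rest on one estimate. If box(X_n, X) < \<epsilon>, there are parameters \<phi>_n, \<phi> of
  X_n, X and a set I_0 of measure \<ge> 1 - \<epsilon> on which the distances pulled back to I differ
  by at most \<epsilon>; by tightness of X one may also assume that these distances are bounded by some
  R on I_0. Any transformation of distances that is uniformly continuous on [0, R + 1], uniformly in
  n, then keeps the pulled-back distances close on I_0.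

  For (b) this transformation is F_n, and metric preserving functions are subadditive on
  distances, so pointwise convergence F_n \<rightarrow> F is uniform on compact intervals. For (a) it
  is (s, t) \<mapsto> F_p(s, t), which is 2-Lipschitz for the maximum norm and depends continuously
  on 1/p. A parameter of X \<times> Y is obtained from parameters of X and Y by precomposing with a
  measure-preserving map I \<rightarrow> I \<times> I, namely splitting the binary expansion of s into its
  even and odd digits; the sets I_0 of the two factors then pull back to a set of measure at least
  (1 - \<epsilon>)^2.\<close>

abbreviation I01 :: "real set" where "I01 \<equiv> {0..<1}"

section \<open>A measure-preserving map from the unit interval onto the unit square\<close>

definition doubling :: "real \<Rightarrow> real" where
  "doubling x = 2 * x - of_int \<lfloor>2 * x\<rfloor>"

definition first_bit :: "real \<Rightarrow> real" where
  "first_bit x = of_int \<lfloor>2 * x\<rfloor>"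

definition binary_digit :: "nat \<Rightarrow> real \<Rightarrow> real" where
  "binary_digit k x = first_bit ((doubling ^^ k) x)"

definition even_digits :: "real \<Rightarrow> real" where
  "even_digits x = (\<Sum>k. binary_digit (2 * k) x / 2 ^ Suc k)"

definition odd_digits :: "real \<Rightarrow> real" where
  "odd_digits x = (\<Sum>k. binary_digit (2 * k + 1) x / 2 ^ Suc k)"

lemma doubling_in_I01: "doubling x \<in> I01"
  unfolding doubling_def by (auto simp: floor_le_iff) linarith+

lemma funpow_doubling_in_I01: "x \<in> I01 \<Longrightarrow> (doubling ^^ k) x \<in> I01"
  by (cases k) (auto simp: doubling_in_I01 simp del: atLeastLessThan_iff)

lemma first_bit_01: "x \<in> I01 \<Longrightarrow> first_bit x = 0 \<or> first_bit x = 1"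
proof -
  assume "x \<in> I01"
  then have "\<lfloor>2 * x\<rfloor> = 0 \<or> \<lfloor>2 * x\<rfloor> = 1"
    by (auto simp: floor_eq_iff)
  then show ?thesis unfolding first_bit_def by auto
qed

lemma binary_digit_01: "x \<in> I01 \<Longrightarrow> binary_digit k x = 0 \<or> binary_digit k x = 1"
  unfolding binary_digit_def using first_bit_01 funpow_doubling_in_I01 by blast

lemma binary_digit_Suc: "binary_digit (Suc k) x = binary_digit k (doubling x)"
  unfolding binary_digit_def by (simp only: funpow_Suc_right comp_def)

lemma doubling_borel[measurable]: "doubling \<in> borel_measurable borel"
  unfolding doubling_def by measurable

lemma first_bit_borel[measurable]: "first_bit \<in> borel_measurable borel"
  unfolding first_bit_def by measurable

lemma funpow_doubling_borel[measurable]: "(doubling ^^ k) \<in> borel_measurable borel"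
  by (induction k) auto

lemma binary_digit_borel[measurable]: "binary_digit k \<in> borel_measurable borel"
  unfolding binary_digit_def[abs_def] by measurable

lemma even_digits_borel[measurable]: "even_digits \<in> borel_measurable borel"
  unfolding even_digits_def[abs_def] by measurable

lemma odd_digits_borel[measurable]: "odd_digits \<in> borel_measurable borel"
  unfolding odd_digits_def[abs_def] by measurable

lemma summable_binary_digits:
  assumes "x \<in> I01"
  shows "summable (\<lambda>k. binary_digit (h k) x / 2 ^ Suc k)"
proof (rule summable_comparison_test')
  show "summable (\<lambda>k. (1/2::real) ^ Suc k)"
    using power_half_series by (rule sums_summable)
  show "norm (binary_digit (h k) x / 2 ^ Suc k) \<le> (1/2) ^ Suc k" for k
    using binary_digit_01[OF assms, of "h k"] by (auto simp: power_one_over)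
qed

lemma suminf_binary_digits_bounds:
  assumes x: "x \<in> I01"
  shows "0 \<le> (\<Sum>k. binary_digit (h k) x / 2 ^ Suc k) \<and> (\<Sum>k. binary_digit (h k) x / 2 ^ Suc k) \<le> 1"
proof
  show "0 \<le> (\<Sum>k. binary_digit (h k) x / 2 ^ Suc k)"
    using binary_digit_01[OF x] by (intro suminf_nonneg summable_binary_digits[OF x]) (metis
      divide_nonneg_pos order_refl zero_le_one zero_less_power zero_less_numeral)
  have "(\<Sum>k. binary_digit (h k) x / 2 ^ Suc k) \<le> (\<Sum>k. (1/2::real) ^ Suc k)"
  proof (rule suminf_le[OF _ summable_binary_digits[OF x]])
    show "summable (\<lambda>k. (1/2::real) ^ Suc k)"
      using power_half_series by (rule sums_summable)
    show "binary_digit (h k) x / 2 ^ Suc k \<le> (1/2) ^ Suc k" for k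
      using binary_digit_01[OF x, of "h k"] by (auto simp: power_one_over)
  qed
  then show "(\<Sum>k. binary_digit (h k) x / 2 ^ Suc k) \<le> 1"
    using sums_unique[OF power_half_series] by simp
qed

lemma even_digits_bounds: "x \<in> I01 \<Longrightarrow> 0 \<le> even_digits x \<and> even_digits x \<le> 1"
  unfolding even_digits_def using suminf_binary_digits_bounds[of x "\<lambda>k. 2 * k"] by simp

lemma odd_digits_bounds: "x \<in> I01 \<Longrightarrow> 0 \<le> odd_digits x \<and> odd_digits x \<le> 1"
  unfolding odd_digits_def using suminf_binary_digits_bounds[of x "\<lambda>k. 2 * k + 1"] by simp

lemma odd_digits_eq: "odd_digits x = even_digits (doubling x)"
  unfolding odd_digits_def even_digits_def by (simp add: binary_digit_Suc[symmetric])

lemma even_digits_eq: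
  assumes x: "x \<in> I01"
  shows "even_digits x = (first_bit x + odd_digits (doubling x)) / 2"
proof -
  have s: "summable (\<lambda>k. binary_digit (2 * k) x / 2 ^ Suc k)"
    using summable_binary_digits[OF x] .
  have s2: "summable (\<lambda>k. binary_digit (2 * k + 1) (doubling x) / 2 ^ Suc k)"
    using summable_binary_digits[OF doubling_in_I01] .
  have "(\<Sum>k. binary_digit (2 * Suc k) x / 2 ^ Suc (Suc k)) = even_digits x - binary_digit 0 x / 2"
    unfolding even_digits_def using suminf_split_head[OF s] by simp
  moreover have "(\<lambda>k. binary_digit (2 * Suc k) x / 2 ^ Suc (Suc k))
      = (\<lambda>k. binary_digit (2 * k + 1) (doubling x) / 2 ^ Suc k / 2)"
    by (rule ext) (simp add: binary_digit_Suc[symmetric])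
  moreover have "binary_digit 0 x = first_bit x"
    by (simp add: binary_digit_def)
  ultimately show ?thesis
    unfolding odd_digits_def using suminf_divide[OF s2, of 2] by simp
qed

lemma even_digits_eq_1_iff:
  assumes x: "x \<in> I01"
  shows "even_digits x = 1 \<longleftrightarrow> first_bit x = 1 \<and> even_digits (doubling (doubling x)) = 1"
  using even_digits_eq[OF x] odd_digits_eq[of "doubling x"] first_bit_01[OF x]
    even_digits_bounds[OF doubling_in_I01[of "doubling x"]]
  by auto

lemma emeasure_subset_I01_finite:
  "A \<in> sets borel \<Longrightarrow> A \<subseteq> I01 \<Longrightarrow> emeasure lborel A \<noteq> \<infinity>"
  using emeasure_mono[of A I01 lborel] by (auto simp: top_unique)

lemma fmeasurable_subset_I01: "A \<in> sets borel \<Longrightarrow> A \<subseteq> I01 \<Longrightarrow> A \<in> fmeasurable lborel"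
  using emeasure_subset_I01_finite by (auto simp: fmeasurable_def less_top)

lemma null_sets_subset_I01:
  "A \<in> sets borel \<Longrightarrow> A \<subseteq> I01 \<Longrightarrow> measure lborel A = 0 \<Longrightarrow> A \<in> null_sets lborel"
  using emeasure_subset_I01_finite by (simp add: null_sets_def emeasure_eq_ennreal_measure)

lemma measure_eq_mod_null:
  assumes "A \<in> sets borel" "B \<in> sets borel" "Z \<in> null_sets lborel" "A - B \<subseteq> Z" "B - A \<subseteq> Z"
  shows "measure lborel A = measure lborel B"
  using AE_not_in[OF assms(3)] assms(1,2,4,5) by (intro measure_eq_AE) (auto elim!: eventually_mono)

lemma emeasure_lborel_affine_vimage:
  assumes A: "A \<in> sets borel" and c: "c \<noteq> 0"
  shows "emeasure lborel A = ennreal \<bar>c\<bar> * emeasure lborel ((\<lambda>x. t + c * x) -` A)"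
proof -
  have "emeasure lborel A = emeasure (density (distr lborel borel (\<lambda>x. t + c * x)) (\<lambda>_. ennreal \<bar>c\<bar>)) A"
    using lborel_real_affine[OF c, of t] by simp
  also have "\<dots> = ennreal \<bar>c\<bar> * emeasure lborel ((\<lambda>x. t + c * x) -` A)"
    using A by (simp add: emeasure_density_const emeasure_distr)
  finally show ?thesis .
qed

lemma first_bit_doubling_vimage:
  assumes "A \<subseteq> I01" and b: "b = 0 \<or> b = 1"
  shows "{x\<in>I01. first_bit x = b \<and> doubling x \<in> A} = (\<lambda>x. - b + 2 * x) -` A"
proof (intro set_eqI iffI)
  fix x assume "x \<in> {x\<in>I01. first_bit x = b \<and> doubling x \<in> A}"
  then show "x \<in> (\<lambda>x. - b + 2 * x) -` A" by (auto simp: doubling_def first_bit_def)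
next
  fix x assume x: "x \<in> (\<lambda>x. - b + 2 * x) -` A"
  then have r: "0 \<le> - b + 2 * x" "- b + 2 * x < 1" using assms(1) by auto
  then have "\<lfloor>2 * x\<rfloor> = b" using b by (auto simp: floor_eq_iff)
  then show "x \<in> {x\<in>I01. first_bit x = b \<and> doubling x \<in> A}"
    using x r b by (auto simp: doubling_def first_bit_def)
qed

lemma sets_first_bit_doubling:
  "A \<in> sets borel \<Longrightarrow> {x\<in>I01. first_bit x = b \<and> doubling x \<in> A} \<in> sets borel"
  using measurable_sets[OF first_bit_borel, of "{b}"] measurable_sets[OF doubling_borel, of A]
  by (simp add: Int_def[symmetric] Collect_conj_eq vimage_def[symmetric] Int_assoc)

lemma measure_first_bit_doubling:
  assumes A: "A \<in> sets borel" "A \<subseteq> I01" and b: "b = 0 \<or> b = 1"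
  shows "measure lborel {x\<in>I01. first_bit x = b \<and> doubling x \<in> A} = measure lborel A / 2"
proof -
  have "emeasure lborel A = ennreal 2 * emeasure lborel {x\<in>I01. first_bit x = b \<and> doubling x \<in> A}"
    using emeasure_lborel_affine_vimage[OF A(1), of 2 "-b"] first_bit_doubling_vimage[OF A(2) b] by simp
  then show ?thesis
    unfolding measure_def by (simp add: enn2real_mult)
qed

lemma measure_doubling_vimage:
  assumes A: "A \<in> sets borel" "A \<subseteq> I01"
  shows "measure lborel {x\<in>I01. doubling x \<in> A} = measure lborel A"
proof -
  let ?S = "\<lambda>b. {x\<in>I01. first_bit x = b \<and> doubling x \<in> A}"
  have "{x\<in>I01. doubling x \<in> A} = ?S 0 \<union> ?S 1"
    using first_bit_01 by auto
  moreover have "measure lborel (?S 0 \<union> ?S 1) = measure lborel (?S 0) + measure lborel (?S 1)"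
    using sets_first_bit_doubling[OF A(1)]
    by (intro measure_Union emeasure_subset_I01_finite) auto
  ultimately show ?thesis
    using measure_first_bit_doubling[OF A, of 0] measure_first_bit_doubling[OF A, of 1] by simp
qed

text \<open>A point has all even digits 1 iff its first digit is 1 and its double doubling again has
  all even digits 1; as doubling preserves measure and fixing the first digit halves it, this set
  has half its own measure.\<close>

lemma measure_even_digits_eq_1: "measure lborel {x\<in>I01. even_digits x = 1} = 0"
proof -
  let ?N = "{x\<in>I01. even_digits x = 1}"
  let ?N' = "{y\<in>I01. doubling y \<in> ?N}"
  have N: "?N \<in> sets borel" "?N \<subseteq> I01" by measurable auto
  have N': "?N' \<in> sets borel" "?N' \<subseteq> I01" by measurable auto
  have eq: "?N = {x\<in>I01. first_bit x = 1 \<and> doubling x \<in> ?N'}"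
    using even_digits_eq_1_iff doubling_in_I01 by blast
  have "measure lborel {x\<in>I01. first_bit x = 1 \<and> doubling x \<in> ?N'} = measure lborel ?N' / 2"
    by (rule measure_first_bit_doubling[OF N']) simp
  with eq measure_doubling_vimage[OF N] have "measure lborel ?N = measure lborel ?N / 2"
    by metis
  then show ?thesis by linarith
qed

lemma even_digits_eq_1_null: "{x\<in>I01. even_digits x = 1} \<in> null_sets lborel"
  using measure_even_digits_eq_1 by (intro null_sets_subset_I01) auto

lemma null_sets_doubling_vimage:
  assumes N: "N \<in> null_sets lborel" "N \<subseteq> I01"
  shows "{x\<in>I01. doubling x \<in> N} \<in> null_sets lborel"
proof -
  have "N \<in> sets borel" using N(1) by auto
  moreover from this have "{x\<in>I01. doubling x \<in> N} \<in> sets borel" by measurable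
  ultimately show ?thesis
    using measure_doubling_vimage[of N] N by (intro null_sets_subset_I01) (auto simp: measure_def)
qed

lemma odd_digits_eq_1_null: "{x\<in>I01. odd_digits x = 1} \<in> null_sets lborel"
proof -
  have "{x\<in>I01. odd_digits x = 1} = {x\<in>I01. doubling x \<in> {y\<in>I01. even_digits y = 1}}"
    using odd_digits_eq doubling_in_I01 by auto
  then show ?thesis using null_sets_doubling_vimage[OF even_digits_eq_1_null Collect_subset] by simp
qed

definition dyadic_ival :: "nat \<Rightarrow> nat \<Rightarrow> real set" where
  "dyadic_ival m i = {real i / 2 ^ m ..< (real i + 1) / 2 ^ m}"

definition digit_preimage :: "real set \<Rightarrow> real set \<Rightarrow> real set" where
  "digit_preimage A B = {x\<in>I01. even_digits x \<in> A \<and> odd_digits x \<in> B}"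

lemma sets_dyadic_ival[measurable]: "dyadic_ival m i \<in> sets borel"
  unfolding dyadic_ival_def by simp

lemma dyadic_ival_0: "dyadic_ival 0 0 = I01"
  unfolding dyadic_ival_def by simp

lemma sets_digit_preimage[measurable]:
  assumes "A \<in> sets borel" "B \<in> sets borel"
  shows "digit_preimage A B \<in> sets borel"
proof -
  have "digit_preimage A B = I01 \<inter> even_digits -` A \<inter> odd_digits -` B"
    unfolding digit_preimage_def by auto
  then show ?thesis
    using measurable_sets[OF even_digits_borel assms(1)] measurable_sets[OF odd_digits_borel assms(2)]
    by auto
qed

lemma digit_preimage_subset: "digit_preimage A B \<subseteq> I01"
  unfolding digit_preimage_def by auto

lemma dyadic_ival_iff_floor: "v \<in> dyadic_ival m i \<longleftrightarrow> \<lfloor>2 ^ m * v\<rfloor> = int i"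
proof -
  have "v \<in> dyadic_ival m i \<longleftrightarrow> real i \<le> 2 ^ m * v \<and> 2 ^ m * v < real i + 1"
    unfolding dyadic_ival_def by (auto simp: divide_le_eq less_divide_eq mult.commute)
  also have "\<dots> \<longleftrightarrow> \<lfloor>2 ^ m * v\<rfloor> = int i"
    by (simp add: floor_eq_iff)
  finally show ?thesis .
qed

lemma dyadic_ival_Suc_iff:
  assumes d: "d = 0 \<or> d = 1" and v: "0 \<le> v" "v < 1"
  shows "(d + v) / 2 \<in> dyadic_ival (Suc m) i \<longleftrightarrow>
    d = real (i div 2 ^ m) \<and> v \<in> dyadic_ival m (i mod 2 ^ m)"
proof -
  define w where "w = \<lfloor>2 ^ m * v\<rfloor>"
  have w: "0 \<le> w" "w < 2 ^ m"
    unfolding w_def using v by (auto simp: floor_less_iff)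
  then obtain wn :: nat where wn: "w = int wn" "wn < 2 ^ m"
    by (metis nonneg_eq_int of_nat_less_iff of_nat_numeral of_nat_power)
  obtain e :: nat where e: "d = real e" "e \<le> 1"
    using d by (metis of_nat_0 of_nat_1 zero_le_one order_refl)
  have "2 ^ Suc m * ((d + v) / 2) = of_int (int e * 2 ^ m) + 2 ^ m * v"
    using e by (simp add: algebra_simps)
  then have "\<lfloor>2 ^ Suc m * ((d + v) / 2)\<rfloor> = int (e * 2 ^ m + wn)"
    using wn unfolding w_def by (metis floor_add_int add.commute of_nat_add of_nat_mult of_nat_numeral of_nat_power)
  then have "(d + v) / 2 \<in> dyadic_ival (Suc m) i \<longleftrightarrow> e * 2 ^ m + wn = i"
    by (metis dyadic_ival_iff_floor of_nat_eq_iff)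
  also have "\<dots> \<longleftrightarrow> e = i div 2 ^ m \<and> wn = i mod 2 ^ m"
    using wn(2) div_mult_mod_eq[of i "2 ^ m"] by (auto simp: div_mult_self_is_m)
  also have "\<dots> \<longleftrightarrow> d = real (i div 2 ^ m) \<and> v \<in> dyadic_ival m (i mod 2 ^ m)"
    using e wn dyadic_ival_iff_floor[of v m "i mod 2 ^ m"] unfolding w_def by auto
  finally show ?thesis .
qed

text \<open>Up to a null set, the first even digit of x is its first binary digit and the remaining
  digits of x are those of doubling x with the roles of even and odd exchanged.\<close>

lemma measure_digit_preimage_Suc:
  assumes i: "i < 2 ^ Suc m" and B: "B \<in> sets borel"
  shows "measure lborel (digit_preimage (dyadic_ival (Suc m) i) B)
    = measure lborel (digit_preimage B (dyadic_ival m (i mod 2 ^ m))) / 2"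
proof -
  let ?b = "real (i div 2 ^ m)"
  have b: "?b = 0 \<or> ?b = 1"
  proof -
    have "i div 2 ^ m < 2" using i by (simp add: less_mult_imp_div_less)
    then show ?thesis by (cases "i div 2 ^ m") auto
  qed
  let ?Z = "{x\<in>I01. doubling x \<in> {y\<in>I01. odd_digits y = 1}}"
  let ?Q = "digit_preimage B (dyadic_ival m (i mod 2 ^ m))"
  let ?S = "{x\<in>I01. first_bit x = ?b \<and> doubling x \<in> ?Q}"
  have Q: "?Q \<in> sets borel" using B by measurable
  have eq: "x \<in> digit_preimage (dyadic_ival (Suc m) i) B \<longleftrightarrow> x \<in> ?S"
    if x: "x \<in> I01" "x \<notin> ?Z" for x
  proof -
    have v: "0 \<le> odd_digits (doubling x)" "odd_digits (doubling x) < 1"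
      using odd_digits_bounds[OF doubling_in_I01[of x]] x doubling_in_I01[of x] by force+
    have "even_digits x \<in> dyadic_ival (Suc m) i \<longleftrightarrow>
        first_bit x = ?b \<and> odd_digits (doubling x) \<in> dyadic_ival m (i mod 2 ^ m)"
      unfolding even_digits_eq[OF x(1)] by (rule dyadic_ival_Suc_iff[OF first_bit_01[OF x(1)] v])
    then show ?thesis
      unfolding digit_preimage_def using x doubling_in_I01[of x] odd_digits_eq[of x] by auto
  qed
  have "measure lborel (digit_preimage (dyadic_ival (Suc m) i) B) = measure lborel ?S"
  proof (rule measure_eq_mod_null[OF _ sets_first_bit_doubling[OF Q]
        null_sets_doubling_vimage[OF odd_digits_eq_1_null Collect_subset]])
    show "digit_preimage (dyadic_ival (Suc m) i) B \<in> sets borel" using B by measurable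
    show "digit_preimage (dyadic_ival (Suc m) i) B - ?S \<subseteq> ?Z" "?S - digit_preimage (dyadic_ival (Suc m) i) B \<subseteq> ?Z"
      using eq digit_preimage_subset by blast+
  qed
  also have "\<dots> = measure lborel ?Q / 2"
    by (rule measure_first_bit_doubling[OF Q digit_preimage_subset b])
  finally show ?thesis .
qed

lemma measure_digit_preimage_swap:
  assumes B: "B \<in> sets borel"
  shows "measure lborel (digit_preimage I01 B) = measure lborel (digit_preimage B I01)"
proof -
  let ?F = "{y\<in>I01. even_digits y \<in> B}"
  have F: "?F \<in> sets borel" "?F \<subseteq> I01" using B by measurable auto
  have "measure lborel (digit_preimage I01 B) = measure lborel {x\<in>I01. doubling x \<in> ?F}"
  proof (rule measure_eq_mod_null[OF _ _ even_digits_eq_1_null])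
    show "digit_preimage I01 B - {x\<in>I01. doubling x \<in> ?F} \<subseteq> {x\<in>I01. even_digits x = 1}"
      unfolding digit_preimage_def using odd_digits_eq doubling_in_I01 by auto
    show "{x\<in>I01. doubling x \<in> ?F} - digit_preimage I01 B \<subseteq> {x\<in>I01. even_digits x = 1}"
      unfolding digit_preimage_def using odd_digits_eq doubling_in_I01 even_digits_bounds by fastforce
  qed (use B F in measurable)
  also have "\<dots> = measure lborel ?F"
    by (rule measure_doubling_vimage[OF F])
  also have "\<dots> = measure lborel (digit_preimage B I01)"
  proof (rule measure_eq_mod_null[OF F(1) _ odd_digits_eq_1_null])
    show "?F - digit_preimage B I01 \<subseteq> {x\<in>I01. odd_digits x = 1}"
      unfolding digit_preimage_def using odd_digits_bounds by fastforce
    show "digit_preimage B I01 - ?F \<subseteq> {x\<in>I01. odd_digits x = 1}"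
      unfolding digit_preimage_def by auto
  qed (use B in measurable)
  finally show ?thesis .
qed

lemma measure_digit_preimage_I01: "measure lborel (digit_preimage I01 I01) = 1"
proof -
  have "measure lborel (digit_preimage I01 I01) = measure lborel I01"
  proof (rule measure_eq_mod_null[OF _ _ null_sets.Un[OF even_digits_eq_1_null odd_digits_eq_1_null]])
    show "I01 - digit_preimage I01 I01 \<subseteq> {x\<in>I01. even_digits x = 1} \<union> {x\<in>I01. odd_digits x = 1}"
      unfolding digit_preimage_def using even_digits_bounds odd_digits_bounds by fastforce
  qed (auto simp: digit_preimage_def)
  then show ?thesis by simp
qed

lemma measure_digit_preimage_dyadic:
  assumes "i < 2 ^ m" "j < 2 ^ k"
  shows "measure lborel (digit_preimage (dyadic_ival m i) (dyadic_ival k j)) = 1 / 2 ^ (m + k)"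
proof -
  have "\<forall>m k i j. m + k = n \<longrightarrow> i < 2 ^ m \<longrightarrow> j < 2 ^ k \<longrightarrow>
      measure lborel (digit_preimage (dyadic_ival m i) (dyadic_ival k j)) = 1 / 2 ^ (m + k)" for n
  proof (induction n)
    case 0
    then show ?case using measure_digit_preimage_I01 dyadic_ival_0 by simp
  next
    case (Suc n)
    have Suc_m: "measure lborel (digit_preimage (dyadic_ival (Suc m) i) (dyadic_ival k j)) = 1 / 2 ^ (Suc m + k)"
      if "m + k = n" "i < 2 ^ Suc m" "j < 2 ^ k" for m k i j
      using Suc.IH that measure_digit_preimage_Suc[OF that(2) sets_dyadic_ival[of k j]]
      by (simp add: add.commute)
    show ?case
    proof (intro allI impI)
      fix m k i j :: nat assume mk: "m + k = Suc n" and ij: "i < 2 ^ m" "j < 2 ^ k"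
      show "measure lborel (digit_preimage (dyadic_ival m i) (dyadic_ival k j)) = 1 / 2 ^ (m + k)"
      proof (cases m)
        case (Suc m')
        then show ?thesis using Suc_m[of m' k i j] mk ij by simp
      next
        case 0
        then have "k = Suc n" "i = 0" using mk ij by auto
        then show ?thesis
          using measure_digit_preimage_swap[OF sets_dyadic_ival, of k j] Suc_m[of n 0 j 0] 0 ij
            dyadic_ival_0 by simp
      qed
    qed
  qed
  then show ?thesis using assms by blast
qed

lemma space_unitI[simp]: "space unitI = I01"
  unfolding unitI_def by simp

lemma sets_unitI_iff: "A \<in> sets unitI \<longleftrightarrow> A \<in> sets borel \<and> A \<subseteq> I01"
proof
  assume "A \<in> sets unitI"
  then obtain B where "B \<in> sets borel" "A = I01 \<inter> B"
    unfolding unitI_def sets_restrict_space by auto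
  then show "A \<in> sets borel \<and> A \<subseteq> I01" by auto
next
  assume "A \<in> sets borel \<and> A \<subseteq> I01"
  then have "A = I01 \<inter> A" "A \<in> sets lborel" by auto
  then show "A \<in> sets unitI" unfolding unitI_def sets_restrict_space by blast
qed

lemma emeasure_unitI: "A \<subseteq> I01 \<Longrightarrow> emeasure unitI A = emeasure lborel A"
  unfolding unitI_def by (rule emeasure_restrict_space) auto

lemma prob_space_unitI: "prob_space unitI"
  by (rule prob_spaceI) (simp add: emeasure_unitI)

definition dyadic_segments :: "real set set" where
  "dyadic_segments = {{0..<real i / 2 ^ m} | m i. i \<le> 2 ^ m}"

lemma dyadic_segments_subset: "dyadic_segments \<subseteq> Pow I01"
proof
  fix A assume "A \<in> dyadic_segments"
  then obtain m i where A: "A = {0..<real i / 2 ^ m}" "i \<le> 2 ^ m"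
    unfolding dyadic_segments_def by auto
  then have "real i / 2 ^ m \<le> 1" by (simp add: divide_le_eq)
  then show "A \<in> Pow I01" using A by auto
qed

lemma I01_in_dyadic_segments: "I01 \<in> dyadic_segments"
  unfolding dyadic_segments_def by (rule CollectI, rule exI[of _ 0], rule exI[of _ 1]) simp

lemma empty_in_dyadic_segments: "{} \<in> dyadic_segments"
  unfolding dyadic_segments_def by (rule CollectI, rule exI[of _ 0], rule exI[of _ 0]) simp

lemma dyadic_segments_Int:
  assumes "a \<in> dyadic_segments" "b \<in> dyadic_segments"
  shows "a \<inter> b \<in> dyadic_segments"
proof -
  obtain m i m' i' where "a = {0..<real i / 2 ^ m}" "b = {0..<real i' / 2 ^ m'}"
    using assms unfolding dyadic_segments_def by auto
  then have "a \<inter> b = a \<or> a \<inter> b = b" by (cases "real i / 2 ^ m \<le> real i' / 2 ^ m'") auto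
  then show ?thesis using assms by auto
qed

text \<open>Each initial segment of I01 is the increasing union of the dyadic segments
  {0..<\<lfloor>2^n c\<rfloor> / 2^n}.\<close>

lemma lessThan_in_sigma_dyadic_segments: "I01 \<inter> {..<c} \<in> sigma_sets I01 dyadic_segments"
proof (cases "c \<le> 0")
  case True
  then have "I01 \<inter> {..<c} = {}" by auto
  then show ?thesis using empty_in_dyadic_segments by (simp add: sigma_sets.Basic)
next
  case False
  show ?thesis
  proof (cases "1 \<le> c")
    case True
    then have "I01 \<inter> {..<c} = I01" by auto
    then show ?thesis using I01_in_dyadic_segments by (simp add: sigma_sets.Basic)
  next
    case c1: False
    define A where "A n = {0..<real (nat \<lfloor>2^n * c\<rfloor>) / 2^n}" for n :: nat
    have AG: "A n \<in> dyadic_segments" for n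
    proof -
      have "\<lfloor>2^n * c\<rfloor> \<le> 2^n"
      proof -
        have "2^n * c \<le> 2^n" using c1 by simp
        then show ?thesis by (metis floor_mono floor_of_nat of_nat_numeral of_nat_power)
      qed
      then have "nat \<lfloor>2^n * c\<rfloor> \<le> 2^n" by (simp add: nat_le_iff)
      then show ?thesis unfolding A_def dyadic_segments_def by blast
    qed
    have "I01 \<inter> {..<c} = (\<Union>n. A n)"
    proof (intro set_eqI iffI)
      fix x assume x: "x \<in> I01 \<inter> {..<c}"
      then have "0 < c - x" by auto
      obtain n :: nat where n: "1 / (c - x) < 2^n" using real_arch_pow[of 2 "1/(c-x)"] by auto
      then have "1 < 2^n * (c - x)" using \<open>0 < c - x\<close> by (simp add: field_simps)
      then have "2^n * x < of_int \<lfloor>2^n * c\<rfloor>" by (simp add: algebra_simps) linarith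
      moreover have "0 \<le> \<lfloor>2^n * c\<rfloor>" using False by simp
      ultimately have "x < real (nat \<lfloor>2^n * c\<rfloor>) / 2^n" by (simp add: field_simps)
      then show "x \<in> (\<Union>n. A n)" using x unfolding A_def by auto
    next
      fix x assume "x \<in> (\<Union>n. A n)"
      then obtain n where x: "0 \<le> x" "x < real (nat \<lfloor>2^n * c\<rfloor>) / 2^n" unfolding A_def by auto
      have "0 \<le> \<lfloor>2^n * c\<rfloor>" using False by simp
      then have "real (nat \<lfloor>2^n * c\<rfloor>) \<le> 2^n * c" by simp
      then have "real (nat \<lfloor>2^n * c\<rfloor>) / 2^n \<le> c" by (simp add: divide_le_eq mult.commute)
      then show "x \<in> I01 \<inter> {..<c}" using x c1 by auto
    qed
    moreover have "(\<Union>n. A n) \<in> sigma_sets I01 dyadic_segments"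
      by (rule sigma_sets.Union) (rule sigma_sets.Basic[OF AG])
    ultimately show ?thesis by simp
  qed
qed

lemma sets_unitI_dyadic_segments: "sets unitI = sigma_sets I01 dyadic_segments"
proof -
  have "sets unitI = (\<inter>) I01 ` sets borel" unfolding unitI_def sets_restrict_space by simp
  also have bI: "sets (borel::real measure) = sigma_sets UNIV (range lessThan)"
  proof -
    have "(borel::real measure) = sigma UNIV (range lessThan)" by (rule borel_Iio)
    moreover have "sets (sigma UNIV (range lessThan)) = sigma_sets UNIV (range (lessThan::real \<Rightarrow> real set))"
      by (rule sets_measure_of) auto
    ultimately show ?thesis by simp
  qed
  also have "(\<inter>) I01 ` sigma_sets UNIV (range lessThan) = sigma_sets I01 ((\<inter>) I01 ` range lessThan)"
  proof (rule sigma_sets_Int)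
    have "I01 \<in> sets borel" by simp
    then show "I01 \<in> sigma_sets UNIV (range lessThan)" using bI by simp
  qed simp
  also have "sigma_sets I01 ((\<inter>) I01 ` range lessThan) = sigma_sets I01 dyadic_segments"
  proof
    show "sigma_sets I01 ((\<inter>) I01 ` range lessThan) \<subseteq> sigma_sets I01 dyadic_segments"
      by (rule sigma_sets_mono) (auto intro: lessThan_in_sigma_dyadic_segments)
    show "sigma_sets I01 dyadic_segments \<subseteq> sigma_sets I01 ((\<inter>) I01 ` range lessThan)"
    proof (rule sigma_sets_mono, rule subsetI)
      fix A assume "A \<in> dyadic_segments"
      then obtain m i where A: "A = {0..<real i / 2^m}" "i \<le> 2^m" unfolding dyadic_segments_def by auto
      have le1: "real i / 2^m \<le> 1" using A(2) by (simp add: divide_le_eq)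
      have "A = I01 \<inter> {..<real i / 2^m}" unfolding A(1) using order.strict_trans2[OF _ le1] by auto
      then show "A \<in> sigma_sets I01 ((\<inter>) I01 ` range lessThan)" by (auto intro: sigma_sets.Basic)
    qed
  qed
  finally show ?thesis .
qed

lemma less_dyadic_iff:
  assumes "0 \<le> v"
  shows "v < real i / 2^m \<longleftrightarrow> (\<exists>i'<i. v \<in> dyadic_ival m i')"
proof -
  have p: "(0::real) < 2^m" by simp
  have "v < real i / 2^m \<longleftrightarrow> 2^m * v < real i" using p by (simp add: less_divide_eq mult.commute)
  also have "\<dots> \<longleftrightarrow> \<lfloor>2^m * v\<rfloor> < int i" by (simp add: floor_less_iff)
  also have "\<dots> \<longleftrightarrow> (\<exists>i'<i. \<lfloor>2^m * v\<rfloor> = int i')"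
  proof -
    have "0 \<le> \<lfloor>2^m * v\<rfloor>" using assms by simp
    then show ?thesis by (metis nonneg_int_cases of_nat_less_iff)
  qed
  finally show ?thesis using dyadic_ival_iff_floor by simp
qed

lemma dyadic_ival_disjoint: "i \<noteq> i' \<Longrightarrow> v \<in> dyadic_ival m i \<Longrightarrow> v \<notin> dyadic_ival m i'"
  using dyadic_ival_iff_floor by simp

lemma measure_digit_preimage_segments:
  assumes i: "i \<le> 2 ^ m" and j: "j \<le> 2 ^ k"
  shows "measure lborel (digit_preimage {0..<real i / 2 ^ m} {0..<real j / 2 ^ k})
    = real i / 2 ^ m * (real j / 2 ^ k)"
proof -
  let ?F = "\<lambda>p. digit_preimage (dyadic_ival m (fst p)) (dyadic_ival k (snd p))"
  have "digit_preimage {0..<real i / 2 ^ m} {0..<real j / 2 ^ k} = (\<Union>p\<in>{..<i}\<times>{..<j}. ?F p)"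
  proof (intro set_eqI iffI)
    fix x assume x: "x \<in> digit_preimage {0..<real i / 2 ^ m} {0..<real j / 2 ^ k}"
    then have xu: "x \<in> I01" unfolding digit_preimage_def by auto
    obtain i' where "i' < i" "even_digits x \<in> dyadic_ival m i'"
      using less_dyadic_iff[of "even_digits x" i m] x even_digits_bounds[OF xu]
      unfolding digit_preimage_def by auto
    moreover obtain j' where "j' < j" "odd_digits x \<in> dyadic_ival k j'"
      using less_dyadic_iff[of "odd_digits x" j k] x odd_digits_bounds[OF xu]
      unfolding digit_preimage_def by auto
    ultimately show "x \<in> (\<Union>p\<in>{..<i}\<times>{..<j}. ?F p)"
      using xu unfolding digit_preimage_def by force
  next
    fix x assume "x \<in> (\<Union>p\<in>{..<i}\<times>{..<j}. ?F p)"
    then obtain i' j' where x: "i' < i" "j' < j" "x \<in> I01"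
      "even_digits x \<in> dyadic_ival m i'" "odd_digits x \<in> dyadic_ival k j'"
      unfolding digit_preimage_def by auto
    have "even_digits x < real i / 2 ^ m"
      using less_dyadic_iff[of "even_digits x" i m] x even_digits_bounds[OF x(3)] by auto
    moreover have "odd_digits x < real j / 2 ^ k"
      using less_dyadic_iff[of "odd_digits x" j k] x odd_digits_bounds[OF x(3)] by auto
    ultimately show "x \<in> digit_preimage {0..<real i / 2 ^ m} {0..<real j / 2 ^ k}"
      using x even_digits_bounds[OF x(3)] odd_digits_bounds[OF x(3)]
      unfolding digit_preimage_def by auto
  qed
  moreover have "measure lborel (\<Union>p\<in>{..<i}\<times>{..<j}. ?F p) = (\<Sum>p\<in>{..<i}\<times>{..<j}. measure lborel (?F p))"
  proof (rule measure_UNION')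
    show "?F p \<in> fmeasurable lborel" for p
      by (rule fmeasurable_subset_I01[OF sets_digit_preimage digit_preimage_subset]) auto
    show "pairwise (\<lambda>p q. disjnt (?F p) (?F q)) ({..<i}\<times>{..<j})"
      unfolding pairwise_def disjnt_def digit_preimage_def using dyadic_ival_disjoint
      by (auto simp: prod_eq_iff)
  qed simp
  moreover have "measure lborel (?F p) = 1 / 2 ^ (m + k)" if "p \<in> {..<i}\<times>{..<j}" for p
    using that i j by (intro measure_digit_preimage_dyadic) auto
  ultimately show ?thesis by (simp add: power_add)
qed

text \<open>The points whose even or odd digits are eventually all 1 form a null set; they are sent to
  (0, 0) so that the map takes values in the unit square.\<close>

definition unpair_digits :: "real \<Rightarrow> real \<times> real" where
  "unpair_digits x =
    (if even_digits x < 1 \<and> odd_digits x < 1 then (even_digits x, odd_digits x) else (0, 0))"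

lemma unpair_digits_in_I01: "x \<in> I01 \<Longrightarrow> unpair_digits x \<in> I01 \<times> I01"
  unfolding unpair_digits_def using even_digits_bounds odd_digits_bounds by auto

lemma unpair_digits_measurable: "unpair_digits \<in> measurable unitI (unitI \<Otimes>\<^sub>M unitI)"
proof -
  have [measurable]: "(\<lambda>x. fst (unpair_digits x)) \<in> borel_measurable borel"
    "(\<lambda>x. snd (unpair_digits x)) \<in> borel_measurable borel"
    unfolding unpair_digits_def by measurable
  have "(\<lambda>x. fst (unpair_digits x)) \<in> measurable unitI unitI"
    unfolding unitI_def
    by (rule measurable_restrict_space2, use unpair_digits_in_I01 in force)
      (rule measurable_restrict_space1, simp)
  moreover have "(\<lambda>x. snd (unpair_digits x)) \<in> measurable unitI unitI"
    unfolding unitI_def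
    by (rule measurable_restrict_space2, use unpair_digits_in_I01 in force)
      (rule measurable_restrict_space1, simp)
  ultimately have "(\<lambda>x. (fst (unpair_digits x), snd (unpair_digits x))) \<in> measurable unitI (unitI \<Otimes>\<^sub>M unitI)"
    by (rule measurable_Pair)
  then show ?thesis by simp
qed

lemma measure_unpair_digits_vimage_Times:
  assumes "A \<in> sets unitI" "B \<in> sets unitI"
  shows "measure lborel (unpair_digits -` (A \<times> B) \<inter> I01) = measure lborel (digit_preimage A B)"
proof (rule measure_eq_mod_null[OF _ _ null_sets.Un[OF even_digits_eq_1_null odd_digits_eq_1_null]])
  have "A \<times> B \<in> sets (unitI \<Otimes>\<^sub>M unitI)" using assms by simp
  from measurable_sets[OF unpair_digits_measurable this]
  show "unpair_digits -` (A \<times> B) \<inter> I01 \<in> sets borel"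
    by (simp add: sets_unitI_iff)
  show "digit_preimage A B \<in> sets borel"
    using assms by (intro sets_digit_preimage) (simp_all add: sets_unitI_iff)
  show "unpair_digits -` (A \<times> B) \<inter> I01 - digit_preimage A B
      \<subseteq> {x\<in>I01. even_digits x = 1} \<union> {x\<in>I01. odd_digits x = 1}"
    "digit_preimage A B - unpair_digits -` (A \<times> B) \<inter> I01
      \<subseteq> {x\<in>I01. even_digits x = 1} \<union> {x\<in>I01. odd_digits x = 1}"
    unfolding unpair_digits_def digit_preimage_def using even_digits_bounds odd_digits_bounds
    by fastforce+
qed

definition dyadic_rectangles :: "(real \<times> real) set set" where
  "dyadic_rectangles = {a \<times> b | a b. a \<in> dyadic_segments \<and> b \<in> dyadic_segments}"

lemma Int_stable_dyadic_rectangles: "Int_stable dyadic_rectangles"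
  unfolding Int_stable_def dyadic_rectangles_def
proof (safe)
  fix a b a' b' assume "a \<in> dyadic_segments" "b \<in> dyadic_segments" "a' \<in> dyadic_segments" "b' \<in> dyadic_segments"
  then show "\<exists>c d. a \<times> b \<inter> a' \<times> b' = c \<times> d \<and> c \<in> dyadic_segments \<and> d \<in> dyadic_segments"
    by (intro exI[of _ "a \<inter> a'"] exI[of _ "b \<inter> b'"]) (auto intro: dyadic_segments_Int)
qed

lemma sets_unitI_pair: "sets (unitI \<Otimes>\<^sub>M unitI) = sigma_sets (I01 \<times> I01) dyadic_rectangles"
proof -
  have "sets (unitI \<Otimes>\<^sub>M unitI) = sets (sigma (space unitI \<times> space unitI) dyadic_rectangles)"
    unfolding dyadic_rectangles_def
    by (rule sets_pair_eq[where Ca="{I01}" and Cb="{I01}"])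
      (use dyadic_segments_subset sets_unitI_dyadic_segments I01_in_dyadic_segments in auto)
  also have "\<dots> = sigma_sets (I01 \<times> I01) dyadic_rectangles"
    unfolding dyadic_rectangles_def using dyadic_segments_subset by (subst sets_measure_of) auto
  finally show ?thesis .
qed

theorem distr_unpair_digits: "distr unitI (unitI \<Otimes>\<^sub>M unitI) unpair_digits = unitI \<Otimes>\<^sub>M unitI"
proof (rule measure_eqI_generator_eq[OF Int_stable_dyadic_rectangles,
      where \<Omega>="I01 \<times> I01" and A="\<lambda>_. I01 \<times> I01"])
  show "dyadic_rectangles \<subseteq> Pow (I01 \<times> I01)"
    unfolding dyadic_rectangles_def using dyadic_segments_subset by auto
  show "sets (distr unitI (unitI \<Otimes>\<^sub>M unitI) unpair_digits) = sigma_sets (I01 \<times> I01) dyadic_rectangles"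
    "sets (unitI \<Otimes>\<^sub>M unitI) = sigma_sets (I01 \<times> I01) dyadic_rectangles"
    using sets_unitI_pair by simp_all
  show "range (\<lambda>_. I01 \<times> I01) \<subseteq> dyadic_rectangles"
    unfolding dyadic_rectangles_def using I01_in_dyadic_segments by auto
  show "(\<Union>i::nat. I01 \<times> I01) = I01 \<times> I01" by simp
  interpret U: prob_space unitI by (rule prob_space_unitI)
  interpret UU: prob_space "distr unitI (unitI \<Otimes>\<^sub>M unitI) unpair_digits"
    by (rule U.prob_space_distr[OF unpair_digits_measurable])
  show "emeasure (distr unitI (unitI \<Otimes>\<^sub>M unitI) unpair_digits) (I01 \<times> I01) \<noteq> \<infinity>" for i
    by simp
  fix X assume "X \<in> dyadic_rectangles"
  then obtain m i k j where X: "X = {0..<real i / 2 ^ m} \<times> {0..<real j / 2 ^ k}" "i \<le> 2 ^ m" "j \<le> 2 ^ k"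
    unfolding dyadic_rectangles_def dyadic_segments_def by auto
  have sub: "{0..<real i / 2 ^ m} \<subseteq> I01" "{0..<real j / 2 ^ k} \<subseteq> I01"
    using X dyadic_segments_subset unfolding dyadic_segments_def by blast+
  have sets: "{0..<real i / 2 ^ m} \<in> sets unitI" "{0..<real j / 2 ^ k} \<in> sets unitI"
    using sub by (simp_all add: sets_unitI_iff)
  then have "unpair_digits -` X \<inter> I01 \<in> sets unitI"
    using X measurable_sets[OF unpair_digits_measurable, of X] by simp
  then have "emeasure (distr unitI (unitI \<Otimes>\<^sub>M unitI) unpair_digits) X
      = emeasure lborel (unpair_digits -` X \<inter> I01)"
    using X sets by (simp add: emeasure_distr[OF unpair_digits_measurable] emeasure_unitI)
  also have "\<dots> = ennreal (measure lborel (unpair_digits -` X \<inter> I01))"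
    using \<open>unpair_digits -` X \<inter> I01 \<in> sets unitI\<close> emeasure_subset_I01_finite
    by (intro emeasure_eq_ennreal_measure) (auto simp: sets_unitI_iff)
  also have "\<dots> = ennreal (real i / 2 ^ m * (real j / 2 ^ k))"
    using measure_unpair_digits_vimage_Times[OF sets] measure_digit_preimage_segments X by simp
  also have "\<dots> = emeasure unitI {0..<real i / 2 ^ m} * emeasure unitI {0..<real j / 2 ^ k}"
    using sub by (simp add: emeasure_unitI ennreal_mult'[symmetric])
  also have "\<dots> = emeasure (unitI \<Otimes>\<^sub>M unitI) X"
    using X sets by (simp add: U.emeasure_pair_measure_Times)
  finally show "emeasure (distr unitI (unitI \<Otimes>\<^sub>M unitI) unpair_digits) X = emeasure (unitI \<Otimes>\<^sub>M unitI) X" .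
qed

section \<open>Parameters\<close>

lemma sets_parameter_vimage:
  assumes "parameter m \<phi>" "C \<in> sets m"
  shows "{s\<in>I01. \<phi> s \<in> C} \<in> sets unitI"
proof -
  have "\<phi> \<in> measurable unitI m" using assms(1) by (simp add: parameter_def)
  from measurable_sets[OF this assms(2)] have "\<phi> -` C \<inter> space unitI \<in> sets unitI" .
  moreover have "\<phi> -` C \<inter> space unitI = {s\<in>I01. \<phi> s \<in> C}" by auto
  ultimately show ?thesis by simp
qed

lemma measure_parameter_vimage:
  assumes "parameter m \<phi>" "C \<in> sets m"
  shows "measure unitI {s\<in>I01. \<phi> s \<in> C} = measure m C"
proof -
  have \<phi>: "\<phi> \<in> measurable unitI m" "distr unitI m \<phi> = m"
    using assms(1) unfolding parameter_def by auto
  have "measure m C = measure unitI (\<phi> -` C \<inter> space unitI)"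
    using measure_distr[OF \<phi>(1), of C] assms(2) \<phi>(2) by simp
  also have "\<phi> -` C \<inter> space unitI = {s\<in>I01. \<phi> s \<in> C}" by auto
  finally show ?thesis by simp
qed

lemma parameter_pair:
  assumes \<phi>: "parameter M1 \<phi>" and \<psi>: "parameter M2 \<psi>" and sf: "sigma_finite_measure M2"
  shows "parameter (M1 \<Otimes>\<^sub>M M2) ((\<lambda>(u, v). (\<phi> u, \<psi> v)) \<circ> unpair_digits)"
proof -
  have m1: "\<phi> \<in> measurable unitI M1" and d1: "distr unitI M1 \<phi> = M1"
    and m2: "\<psi> \<in> measurable unitI M2" and d2: "distr unitI M2 \<psi> = M2"
    using \<phi> \<psi> unfolding parameter_def by auto
  have m: "(\<lambda>(u, v). (\<phi> u, \<psi> v)) \<in> measurable (unitI \<Otimes>\<^sub>M unitI) (M1 \<Otimes>\<^sub>M M2)"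
    using m1 m2 by measurable
  have "distr unitI (M1 \<Otimes>\<^sub>M M2) ((\<lambda>(u, v). (\<phi> u, \<psi> v)) \<circ> unpair_digits)
      = distr (distr unitI (unitI \<Otimes>\<^sub>M unitI) unpair_digits) (M1 \<Otimes>\<^sub>M M2) (\<lambda>(u, v). (\<phi> u, \<psi> v))"
    by (rule distr_distr[OF m unpair_digits_measurable, symmetric])
  also have "\<dots> = distr unitI M1 \<phi> \<Otimes>\<^sub>M distr unitI M2 \<psi>"
    unfolding distr_unpair_digits
    by (rule pair_measure_distr[OF m1 m2, symmetric]) (simp add: d2 sf)
  finally show ?thesis
    unfolding parameter_def d1 d2 using measurable_comp[OF unpair_digits_measurable m] by simp
qed

lemma distr_pair_snd:
  assumes "prob_space M1" "prob_space M2"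
  shows "distr (M1 \<Otimes>\<^sub>M M2) M2 snd = M2"
proof (rule measure_eqI)
  interpret P1: prob_space M1 by fact
  interpret P2: prob_space M2 by fact
  fix A assume "A \<in> sets (distr (M1 \<Otimes>\<^sub>M M2) M2 snd)"
  then have A: "A \<in> sets M2" by simp
  have "emeasure (distr (M1 \<Otimes>\<^sub>M M2) M2 snd) A = emeasure (M1 \<Otimes>\<^sub>M M2) (space M1 \<times> A)"
    using A by (auto simp: emeasure_distr space_pair_measure dest: sets.sets_into_space
      intro!: arg_cong2[where f=emeasure])
  also have "\<dots> = emeasure M2 A"
    using A by (simp add: P2.emeasure_pair_measure_Times P1.emeasure_space_1)
  finally show "emeasure (distr (M1 \<Otimes>\<^sub>M M2) M2 snd) A = emeasure M2 A" .
qed simp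

lemma parameter_fst:
  assumes "parameter (M1 \<Otimes>\<^sub>M M2) \<Phi>" "prob_space M2"
  shows "parameter M1 (fst \<circ> \<Phi>)"
proof -
  interpret P2: prob_space M2 by fact
  have m: "\<Phi> \<in> measurable unitI (M1 \<Otimes>\<^sub>M M2)" and d: "distr unitI (M1 \<Otimes>\<^sub>M M2) \<Phi> = M1 \<Otimes>\<^sub>M M2"
    using assms(1) unfolding parameter_def by auto
  have "distr unitI M1 (fst \<circ> \<Phi>) = distr (M1 \<Otimes>\<^sub>M M2) M1 fst"
    using distr_distr[OF measurable_fst m] d by simp
  then show ?thesis
    unfolding parameter_def using measurable_comp[OF m measurable_fst] P2.distr_pair_fst by simp
qed

lemma parameter_snd:
  assumes "parameter (M1 \<Otimes>\<^sub>M M2) \<Phi>" "prob_space M1" "prob_space M2"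
  shows "parameter M2 (snd \<circ> \<Phi>)"
proof -
  have m: "\<Phi> \<in> measurable unitI (M1 \<Otimes>\<^sub>M M2)" and d: "distr unitI (M1 \<Otimes>\<^sub>M M2) \<Phi> = M1 \<Otimes>\<^sub>M M2"
    using assms(1) unfolding parameter_def by auto
  have "distr unitI M2 (snd \<circ> \<Phi>) = distr (M1 \<Otimes>\<^sub>M M2) M2 snd"
    using distr_distr[OF measurable_snd m] d by simp
  then show ?thesis
    unfolding parameter_def using measurable_comp[OF m measurable_snd] distr_pair_snd[OF assms(2,3)]
    by simp
qed

lemma (in prob_space) prob_Int_ge:
  assumes "A \<in> events" "B \<in> events"
  shows "prob A + prob B - 1 \<le> prob (A \<inter> B)"
  using finite_measure_Union'[of A "B - A"] finite_measure_Diff'[of B A] assms prob_le_1[of "A \<union> B"]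
  by (simp add: Un_Diff_cancel Int_commute Diff_Int)

lemma measure_unpair_digits_vimage_Times_unitI:
  assumes A: "A \<in> sets unitI" and B: "B \<in> sets unitI"
  shows "measure unitI {s\<in>I01. unpair_digits s \<in> A \<times> B} = measure unitI A * measure unitI B"
proof -
  interpret U: prob_space unitI by (rule prob_space_unitI)
  have AB: "A \<times> B \<in> sets (unitI \<Otimes>\<^sub>M unitI)" using A B by auto
  have "{s\<in>I01. unpair_digits s \<in> A \<times> B} = unpair_digits -` (A \<times> B) \<inter> space unitI" by auto
  then have "measure unitI {s\<in>I01. unpair_digits s \<in> A \<times> B}
      = measure (distr unitI (unitI \<Otimes>\<^sub>M unitI) unpair_digits) (A \<times> B)"
    using measure_distr[OF unpair_digits_measurable AB] by simp
  also have "\<dots> = measure unitI A * measure unitI B"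
    unfolding distr_unpair_digits using U.emeasure_pair_measure_Times[OF A B]
    by (simp add: measure_def enn2real_mult)
  finally show ?thesis .
qed

section \<open>The box distance\<close>

definition box_set ::
  "('a \<Rightarrow> 'a \<Rightarrow> real) \<Rightarrow> 'a measure \<Rightarrow> ('b \<Rightarrow> 'b \<Rightarrow> real) \<Rightarrow> 'b measure \<Rightarrow> real set" where
  "box_set dX mX dY mY = {\<epsilon>. 0 \<le> \<epsilon> \<and>
     (\<exists>\<phi> \<psi> I0. parameter mX \<phi> \<and> parameter mY \<psi> \<and> I0 \<in> sets unitI \<and>
        measure unitI I0 \<ge> 1 - \<epsilon> \<and>
        (\<forall>s\<in>I0. \<forall>t\<in>I0. \<bar>dX (\<phi> s) (\<phi> t) - dY (\<psi> s) (\<psi> t)\<bar> \<le> \<epsilon>))}"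

text \<open>If one of the measures has no parameter, the box distance is the infimum of the empty set,
  a real number about which nothing is known.\<close>

definition box_admissible :: "'a measure \<Rightarrow> 'b measure \<Rightarrow> bool" where
  "box_admissible mX mY \<longleftrightarrow> (\<exists>\<phi>. parameter mX \<phi>) \<and> (\<exists>\<psi>. parameter mY \<psi>)"

lemma box_eq_Inf_box_set: "box dX mX dY mY = Inf (box_set dX mX dY mY)"
  unfolding box_def box_set_def ..

lemma box_set_eq_empty_iff: "box_set dX mX dY mY = {} \<longleftrightarrow> \<not> box_admissible mX mY"
proof
  assume "\<not> box_admissible mX mY"
  then show "box_set dX mX dY mY = {}"
    unfolding box_set_def box_admissible_def by auto
next
  assume "box_set dX mX dY mY = {}"
  moreover have "box_admissible mX mY \<Longrightarrow> 1 \<in> box_set dX mX dY mY"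
    unfolding box_set_def box_admissible_def by (auto intro!: exI[of _ "{}"])
  ultimately show "\<not> box_admissible mX mY" by auto
qed

lemma box_le:
  assumes "0 \<le> \<epsilon>" "parameter mX \<phi>" "parameter mY \<psi>" "I0 \<in> sets unitI" "measure unitI I0 \<ge> 1 - \<epsilon>"
    "\<And>s t. s \<in> I0 \<Longrightarrow> t \<in> I0 \<Longrightarrow> \<bar>dX (\<phi> s) (\<phi> t) - dY (\<psi> s) (\<psi> t)\<bar> \<le> \<epsilon>"
  shows "box dX mX dY mY \<le> \<epsilon>"
  unfolding box_eq_Inf_box_set
proof (rule cInf_lower)
  show "\<epsilon> \<in> box_set dX mX dY mY" unfolding box_set_def using assms by blast
  show "bdd_below (box_set dX mX dY mY)" unfolding box_set_def by (rule bdd_belowI[of _ 0]) auto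
qed

lemma box_nonneg: "box_admissible mX mY \<Longrightarrow> 0 \<le> box dX mX dY mY"
  unfolding box_eq_Inf_box_set using box_set_eq_empty_iff[of dX mX dY mY]
  by (intro cInf_greatest) (auto simp: box_set_def)

lemma box_not_admissible: "\<not> box_admissible mX mY \<Longrightarrow> box dX mX dY mY = Inf {}"
  unfolding box_eq_Inf_box_set using box_set_eq_empty_iff by metis

lemma box_lessD:
  assumes "box_admissible mX mY" "box dX mX dY mY < \<delta>"
  shows "\<exists>\<epsilon> \<phi> \<psi> I0. \<epsilon> < \<delta> \<and> 0 \<le> \<epsilon> \<and> parameter mX \<phi> \<and> parameter mY \<psi> \<and> I0 \<in> sets unitI \<and>
    measure unitI I0 \<ge> 1 - \<epsilon> \<and> (\<forall>s\<in>I0. \<forall>t\<in>I0. \<bar>dX (\<phi> s) (\<phi> t) - dY (\<psi> s) (\<psi> t)\<bar> \<le> \<epsilon>)"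
proof -
  have "box_set dX mX dY mY \<noteq> {}" using box_set_eq_empty_iff assms(1) by blast
  then obtain \<epsilon> where "\<epsilon> \<in> box_set dX mX dY mY" "\<epsilon> < \<delta>"
    using cInf_lessD assms(2) unfolding box_eq_Inf_box_set by blast
  then show ?thesis unfolding box_set_def by blast
qed

lemma box_admissible_pair_iff:
  assumes "prob_space mX" "prob_space mY" "prob_space mX'" "prob_space mY'"
  shows "box_admissible (mX \<Otimes>\<^sub>M mY) (mX' \<Otimes>\<^sub>M mY') \<longleftrightarrow> box_admissible mX mX' \<and> box_admissible mY mY'"
proof
  assume "box_admissible mX mX' \<and> box_admissible mY mY'"
  moreover have "sigma_finite_measure mY" "sigma_finite_measure mY'"
    using assms by (auto intro: prob_space_imp_sigma_finite)
  ultimately show "box_admissible (mX \<Otimes>\<^sub>M mY) (mX' \<Otimes>\<^sub>M mY')"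
    unfolding box_admissible_def by (blast intro: parameter_pair)
next
  assume "box_admissible (mX \<Otimes>\<^sub>M mY) (mX' \<Otimes>\<^sub>M mY')"
  then obtain \<Phi> \<Phi>' where "parameter (mX \<Otimes>\<^sub>M mY) \<Phi>" "parameter (mX' \<Otimes>\<^sub>M mY') \<Phi>'"
    unfolding box_admissible_def by blast
  then show "box_admissible mX mX' \<and> box_admissible mY mY'"
    unfolding box_admissible_def using parameter_fst parameter_snd assms by metis
qed

text \<open>If admissibility fails infinitely often along a box-convergent sequence, the unknown value of
  the infimum of the empty set must be the limit 0.\<close>

lemma box_converges_admissible:
  assumes "box_converges dn mn d m"
  shows "(\<forall>\<^sub>F n in sequentially. box_admissible (mn n) m) \<or> Inf ({} :: real set) = 0"
proof (rule disjCI)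
  assume "Inf ({} :: real set) \<noteq> 0"
  moreover have "(\<lambda>n. box (dn n) (mn n) d m) \<longlonglongrightarrow> 0"
    using assms unfolding box_converges_def .
  ultimately have "\<forall>\<^sub>F n in sequentially. box (dn n) (mn n) d m \<noteq> Inf {}"
    by (intro tendsto_imp_eventually_ne) auto
  then show "\<forall>\<^sub>F n in sequentially. box_admissible (mn n) m"
    by (rule eventually_mono) (use box_not_admissible in metis)
qed

lemma box_convergesI:
  assumes adm: "(\<forall>\<^sub>F n in sequentially. box_admissible (mn n) m) \<or> Inf ({} :: real set) = 0"
    and small: "\<And>\<rho>. 0 < \<rho> \<Longrightarrow>
      \<forall>\<^sub>F n in sequentially. box_admissible (mn n) m \<longrightarrow> box (dn n) (mn n) d m \<le> \<rho>"
  shows "box_converges dn mn d m"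
proof -
  have "\<forall>\<^sub>F n in sequentially. dist (box (dn n) (mn n) d m) 0 < \<rho>" if \<rho>: "0 < \<rho>" for \<rho>
  proof -
    have ev: "\<forall>\<^sub>F n in sequentially. box_admissible (mn n) m \<longrightarrow> box (dn n) (mn n) d m \<le> \<rho> / 2"
      using small[of "\<rho> / 2"] \<rho> by simp
    from adm have "\<forall>\<^sub>F n in sequentially. box (dn n) (mn n) d m = 0 \<or>
        0 \<le> box (dn n) (mn n) d m \<and> box (dn n) (mn n) d m \<le> \<rho> / 2"
    proof
      assume "\<forall>\<^sub>F n in sequentially. box_admissible (mn n) m"
      from eventually_conj[OF this ev] show ?thesis
        by (rule eventually_mono) (use box_nonneg in blast)
    next
      assume "Inf ({} :: real set) = 0"
      with ev show ?thesis
        by (elim eventually_mono) (use box_nonneg box_not_admissible in metis)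
    qed
    then show ?thesis
      by (rule eventually_mono) (use \<rho> in auto)
  qed
  then show ?thesis
    unfolding box_converges_def tendsto_iff by blast
qed

section \<open>Almost isometric parameters of box-convergent sequences\<close>

lemma mm_space_nonempty: "mm_space d m \<Longrightarrow> space m \<noteq> {}"
  unfolding mm_space_def using prob_space.not_empty by blast

lemma mm_space_nonneg:
  assumes "mm_space d m"
  shows "0 \<le> d x y"
proof -
  interpret Metric_space "space m" d using assms unfolding mm_space_def by auto
  show ?thesis by simp
qed

lemma sets_closed_ball:
  assumes mm: "mm_space d m" and x0: "x0 \<in> space m"
  shows "{x\<in>space m. d x x0 \<le> R} \<in> sets m"
proof -
  interpret M: Metric_space "space m" d using mm unfolding mm_space_def by auto
  have "openin M.mtopology (space m - M.mcball x0 R)"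
    using M.closedin_mcball[of x0 R] by (simp add: closedin_def)
  then have "space m - M.mcball x0 R \<in> sets m"
    using mm unfolding mm_space_def by (auto intro: sigma_sets.Basic)
  then have "space m - (space m - M.mcball x0 R) \<in> sets m" by auto
  moreover have "space m - (space m - M.mcball x0 R) = {x\<in>space m. d x x0 \<le> R}"
    using x0 M.commute by auto
  ultimately show ?thesis by simp
qed

lemma mm_space_tight:
  assumes mm: "mm_space d m" and x0: "x0 \<in> space m" and tau: "0 < \<tau>"
  shows "\<exists>R\<ge>0. measure m {x\<in>space m. d x x0 \<le> R} \<ge> 1 - \<tau>"
proof -
  interpret P: prob_space m using mm unfolding mm_space_def by auto
  define C where "C n = {x\<in>space m. d x x0 \<le> real n}" for n :: nat
  have Cs: "range C \<subseteq> sets m" unfolding C_def using sets_closed_ball[OF mm x0] by auto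
  have inc: "incseq C" unfolding C_def incseq_def by auto
  have U: "(\<Union>n. C n) = space m"
  proof
    show "(\<Union>n. C n) \<subseteq> space m" unfolding C_def by auto
    show "space m \<subseteq> (\<Union>n. C n)"
    proof
      fix x assume x: "x \<in> space m"
      obtain n :: nat where "d x x0 \<le> real n" using real_arch_simple by blast
      then show "x \<in> (\<Union>n. C n)" using x unfolding C_def by auto
    qed
  qed
  have "(\<lambda>n. measure m (C n)) \<longlonglongrightarrow> measure m (\<Union>n. C n)"
    by (rule P.finite_Lim_measure_incseq[OF Cs inc])
  then have "(\<lambda>n. measure m (C n)) \<longlonglongrightarrow> 1" using U P.prob_space by simp
  then have "eventually (\<lambda>n. 1 - \<tau> < measure m (C n)) sequentially"
    using tau by (intro order_tendstoD) auto
  then obtain n where "1 - \<tau> < measure m (C n)" by (metis eventually_sequentially order_refl)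
  then show ?thesis unfolding C_def by (intro exI[of _ "real n"]) auto
qed

lemma bounded_parameter_set:
  assumes mm: "mm_space d m" and \<tau>: "0 < \<tau>"
  shows "\<exists>R. \<forall>\<phi>. parameter m \<phi> \<longrightarrow> (\<exists>B\<in>sets unitI. measure unitI B \<ge> 1 - \<tau> \<and>
    (\<forall>s\<in>B. \<forall>t\<in>B. d (\<phi> s) (\<phi> t) \<le> R))"
proof -
  interpret M: Metric_space "space m" d using mm unfolding mm_space_def by auto
  obtain x0 where x0: "x0 \<in> space m" using mm_space_nonempty[OF mm] by auto
  obtain R where R: "measure m {x\<in>space m. d x x0 \<le> R} \<ge> 1 - \<tau>"
    using mm_space_tight[OF mm x0 \<tau>] by auto
  have "\<exists>B\<in>sets unitI. measure unitI B \<ge> 1 - \<tau> \<and> (\<forall>s\<in>B. \<forall>t\<in>B. d (\<phi> s) (\<phi> t) \<le> 2 * R)"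
    if \<phi>: "parameter m \<phi>" for \<phi>
  proof (intro bexI conjI ballI)
    let ?B = "{s\<in>I01. \<phi> s \<in> {x\<in>space m. d x x0 \<le> R}}"
    show "?B \<in> sets unitI" "measure unitI ?B \<ge> 1 - \<tau>"
      using sets_parameter_vimage[OF \<phi> sets_closed_ball[OF mm x0]]
        measure_parameter_vimage[OF \<phi> sets_closed_ball[OF mm x0]] R by auto
    fix s t assume "s \<in> ?B" "t \<in> ?B"
    then show "d (\<phi> s) (\<phi> t) \<le> 2 * R"
      using M.triangle[of "\<phi> s" x0 "\<phi> t"] M.commute[of x0 "\<phi> t"] x0 by auto
  qed
  then show ?thesis by blast
qed

lemma box_converges_almost_isometric_parameters:
  assumes mm: "mm_space d m" and conv: "box_converges dn mn d m" and \<rho>: "0 < \<rho>"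
  shows "\<exists>R. \<forall>\<^sub>F n in sequentially. box_admissible (mn n) m \<longrightarrow>
    (\<exists>\<phi>n \<phi> A. parameter (mn n) \<phi>n \<and> parameter m \<phi> \<and> A \<in> sets unitI \<and> measure unitI A \<ge> 1 - \<rho> \<and>
      (\<forall>s\<in>A. \<forall>t\<in>A. \<bar>dn n (\<phi>n s) (\<phi>n t) - d (\<phi> s) (\<phi> t)\<bar> \<le> \<rho> \<and> d (\<phi> s) (\<phi> t) \<le> R))"
proof -
  interpret U: prob_space unitI by (rule prob_space_unitI)
  obtain R where R: "\<forall>\<phi>. parameter m \<phi> \<longrightarrow> (\<exists>B\<in>sets unitI. measure unitI B \<ge> 1 - \<rho> / 2 \<and>
      (\<forall>s\<in>B. \<forall>t\<in>B. d (\<phi> s) (\<phi> t) \<le> R))"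
    using bounded_parameter_set[OF mm, of "\<rho> / 2"] \<rho> by auto
  have "\<forall>\<^sub>F n in sequentially. box (dn n) (mn n) d m < \<rho> / 2"
    using conv \<rho> unfolding box_converges_def by (intro order_tendstoD) auto
  then have "\<forall>\<^sub>F n in sequentially. box_admissible (mn n) m \<longrightarrow>
    (\<exists>\<phi>n \<phi> A. parameter (mn n) \<phi>n \<and> parameter m \<phi> \<and> A \<in> sets unitI \<and> measure unitI A \<ge> 1 - \<rho> \<and>
      (\<forall>s\<in>A. \<forall>t\<in>A. \<bar>dn n (\<phi>n s) (\<phi>n t) - d (\<phi> s) (\<phi> t)\<bar> \<le> \<rho> \<and> d (\<phi> s) (\<phi> t) \<le> R))"
  proof eventually_elim
    case (elim n)
    show ?case
    proof
      assume adm: "box_admissible (mn n) m"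
      obtain \<epsilon> \<phi>n \<phi> I0 where E: "\<epsilon> < \<rho> / 2" "0 \<le> \<epsilon>" "parameter (mn n) \<phi>n" "parameter m \<phi>"
        "I0 \<in> sets unitI" "measure unitI I0 \<ge> 1 - \<epsilon>"
        "\<forall>s\<in>I0. \<forall>t\<in>I0. \<bar>dn n (\<phi>n s) (\<phi>n t) - d (\<phi> s) (\<phi> t)\<bar> \<le> \<epsilon>"
        using box_lessD[OF adm elim] by blast
      from R E(4) have "\<exists>B\<in>sets unitI. measure unitI B \<ge> 1 - \<rho> / 2 \<and>
          (\<forall>s\<in>B. \<forall>t\<in>B. d (\<phi> s) (\<phi> t) \<le> R)"
        by simp
      then obtain B where B: "B \<in> sets unitI" "measure unitI B \<ge> 1 - \<rho> / 2"
        "\<forall>s\<in>B. \<forall>t\<in>B. d (\<phi> s) (\<phi> t) \<le> R"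
        by blast
      show "\<exists>\<phi>n \<phi> A. parameter (mn n) \<phi>n \<and> parameter m \<phi> \<and> A \<in> sets unitI \<and> measure unitI A \<ge> 1 - \<rho> \<and>
          (\<forall>s\<in>A. \<forall>t\<in>A. \<bar>dn n (\<phi>n s) (\<phi>n t) - d (\<phi> s) (\<phi> t)\<bar> \<le> \<rho> \<and> d (\<phi> s) (\<phi> t) \<le> R)"
      proof (intro exI[of _ \<phi>n] exI[of _ \<phi>] exI[of _ "I0 \<inter> B"] conjI ballI)
        show "I0 \<inter> B \<in> sets unitI" using E(5) B(1) by blast
        show "measure unitI (I0 \<inter> B) \<ge> 1 - \<rho>"
          using U.prob_Int_ge[OF E(5) B(1)] E(1,6) B(2) by linarith
        fix s t assume st: "s \<in> I0 \<inter> B" "t \<in> I0 \<inter> B"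
        then have "\<bar>dn n (\<phi>n s) (\<phi>n t) - d (\<phi> s) (\<phi> t)\<bar> \<le> \<epsilon>" using E(7) by blast
        then show "\<bar>dn n (\<phi>n s) (\<phi>n t) - d (\<phi> s) (\<phi> t)\<bar> \<le> \<rho>" using E(1) by linarith
        show "d (\<phi> s) (\<phi> t) \<le> R" using B(3) st by blast
      qed (use E(3,4) in auto)
    qed
  qed
  then show ?thesis by blast
qed

section \<open>The functions F_p\<close>

definition pnorm :: "real \<Rightarrow> real \<Rightarrow> real \<Rightarrow> real" where
  "pnorm q x y = (x powr q + y powr q) powr (1/q)"

lemma pnorm_nonneg: "0 \<le> pnorm q x y"
  unfolding pnorm_def by simp

lemma pnorm_powr: "q > 0 \<Longrightarrow> (pnorm q x y) powr q = x powr q + y powr q"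
  unfolding pnorm_def by (simp add: powr_powr)

lemma max_le_pnorm:
  assumes "q \<ge> 1" "0 \<le> x" "0 \<le> y"
  shows "max x y \<le> pnorm q x y"
proof -
  have "x = (x powr q) powr (1/q)" "y = (y powr q) powr (1/q)" using assms by (simp_all add: powr_powr)
  moreover have "(x powr q) powr (1/q) \<le> pnorm q x y" "(y powr q) powr (1/q) \<le> pnorm q x y"
    unfolding pnorm_def using assms by (auto intro!: powr_mono2)
  ultimately show ?thesis by (metis max.bounded_iff)
qed

lemma pnorm_le_max:
  assumes "q \<ge> 1" "0 \<le> x" "0 \<le> y"
  shows "pnorm q x y \<le> 2 powr (1/q) * max x y"
proof -
  let ?M = "max x y"
  have "x powr q + y powr q \<le> 2 * ?M powr q"
    using assms powr_mono2[of q x ?M] powr_mono2[of q y ?M] by auto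
  then have "pnorm q x y \<le> (2 * ?M powr q) powr (1/q)" unfolding pnorm_def using assms by (intro powr_mono2) auto
  also have "\<dots> = 2 powr (1/q) * ?M" using assms by (simp add: powr_mult powr_powr)
  finally show ?thesis .
qed

lemma pnorm_mono:
  assumes "q \<ge> 1" "0 \<le> x" "x \<le> x'" "0 \<le> y" "y \<le> y'"
  shows "pnorm q x y \<le> pnorm q x' y'"
  unfolding pnorm_def using assms by (intro powr_mono2 add_mono) auto

lemma powr_convex_combination:
  fixes q a b l :: real
  assumes q: "q \<ge> 1" and a: "0 \<le> a" and b: "0 \<le> b" and l: "0 \<le> l" "l \<le> 1"
  shows "(l * a + (1 - l) * b) powr q \<le> l * a powr q + (1 - l) * b powr q"
proof (cases "a = 0 \<or> b = 0")
  case True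
  have p1: "l powr q \<le> l" using powr_mono'[of 1 q l] l q by simp
  have p2: "(1-l) powr q \<le> 1 - l" using powr_mono'[of 1 q "1-l"] l q by simp
  show ?thesis
  proof (cases "a = 0")
    case True
    then show ?thesis using p2 b by (simp add: powr_mult mult_right_mono)
  next
    case False
    then have "b = 0" using \<open>a = 0 \<or> b = 0\<close> by simp
    then show ?thesis using p1 a by (simp add: powr_mult mult_right_mono)
  qed
next
  case False
  then have "a \<in> {0<..}" "b \<in> {0<..}" using a b by auto
  then show ?thesis using convex_onD[OF powr_convex[OF q], of "1-l" a b] l by simp
qed

lemma pnorm_triangle:
  assumes q: "q \<ge> 1" and nn: "0 \<le> x" "0 \<le> y" "0 \<le> u" "0 \<le> v"
  shows "pnorm q (x + u) (y + v) \<le> pnorm q x y + pnorm q u v"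
proof -
  define A where "A = pnorm q x y"
  define C where "C = pnorm q u v"
  have A0: "A \<ge> 0" "C \<ge> 0" unfolding A_def C_def by (simp_all add: pnorm_nonneg)
  show ?thesis
  proof (cases "A = 0 \<or> C = 0")
    case True
    show ?thesis
    proof (cases "A = 0")
      case True
      then have "x = 0" "y = 0" using max_le_pnorm[OF q nn(1,2)] nn unfolding A_def by auto
      then show ?thesis by (simp add: pnorm_nonneg)
    next
      case False
      then have "C = 0" using True by simp
      then have "u = 0" "v = 0" using max_le_pnorm[OF q nn(3,4)] nn unfolding C_def by auto
      then show ?thesis by (simp add: pnorm_nonneg)
    qed
  next
    case False
    then have Ap: "A > 0" "C > 0" using A0 by auto
    define l where "l = A / (A + C)"
    have l: "0 \<le> l" "l \<le> 1" "1 - l = C / (A + C)" using Ap unfolding l_def by (auto simp: field_simps)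
    have q0: "q > 0" using q by simp
    have lA: "l * (z / A) = z / (A + C)" for z unfolding l_def using Ap by (simp add: field_simps)
    have lC: "(1 - l) * (z / C) = z / (A + C)" for z unfolding l(3) using Ap by (simp add: field_simps)
    have e1: "(x + u) / (A + C) = l * (x / A) + (1 - l) * (u / C)"
      unfolding lA lC by (simp add: add_divide_distrib)
    have e2: "(y + v) / (A + C) = l * (y / A) + (1 - l) * (v / C)"
      unfolding lA lC by (simp add: add_divide_distrib)
    have nA: "(x / A) powr q + (y / A) powr q = 1"
    proof -
      have "(x / A) powr q + (y / A) powr q = (x powr q + y powr q) / A powr q"
        by (simp add: powr_divide add_divide_distrib)
      also have "A powr q = x powr q + y powr q" unfolding A_def by (rule pnorm_powr[OF q0])
      finally show ?thesis using Ap q0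
        by (metis A_def pnorm_powr divide_self powr_gt_zero order_less_irrefl)
    qed
    have nC: "(u / C) powr q + (v / C) powr q = 1"
    proof -
      have "(u / C) powr q + (v / C) powr q = (u powr q + v powr q) / C powr q"
        by (simp add: powr_divide add_divide_distrib)
      also have "C powr q = u powr q + v powr q" unfolding C_def by (rule pnorm_powr[OF q0])
      finally show ?thesis using Ap q0
        by (metis C_def pnorm_powr divide_self powr_gt_zero order_less_irrefl)
    qed
    have "((x + u) / (A + C)) powr q + ((y + v) / (A + C)) powr q
        \<le> (l * (x / A) powr q + (1 - l) * (u / C) powr q) + (l * (y / A) powr q + (1 - l) * (v / C) powr q)"
      unfolding e1 e2 using Ap nn l by (intro add_mono powr_convex_combination[OF q]) auto
    also have "\<dots> = l * ((x / A) powr q + (y / A) powr q) + (1 - l) * ((u / C) powr q + (v / C) powr q)"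
      by (simp add: algebra_simps)
    also have "\<dots> = 1" using nA nC by simp
    finally have le1: "((x + u) / (A + C)) powr q + ((y + v) / (A + C)) powr q \<le> 1" .
    have "(x + u) powr q + (y + v) powr q = (((x + u) / (A + C)) powr q + ((y + v) / (A + C)) powr q) * (A + C) powr q"
      using Ap by (simp add: powr_divide field_simps)
    also have "\<dots> \<le> (A + C) powr q" using le1 by (simp add: mult_left_le_one_le)
    finally have "(x + u) powr q + (y + v) powr q \<le> (A + C) powr q" .
    then have "pnorm q (x + u) (y + v) \<le> ((A + C) powr q) powr (1/q)"
      unfolding pnorm_def using nn q0 by (intro powr_mono2) auto
    also have "\<dots> = A + C" using Ap q0 by (simp add: powr_powr)
    finally show ?thesis unfolding A_def C_def .
  qed
qed

lemma pnorm_eq_0_iff: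
  assumes "q \<ge> 1" "0 \<le> x" "0 \<le> y"
  shows "pnorm q x y = 0 \<longleftrightarrow> x = 0 \<and> y = 0"
proof
  assume "pnorm q x y = 0" then show "x = 0 \<and> y = 0" using max_le_pnorm[OF assms] assms by auto
next
  assume "x = 0 \<and> y = 0" then show "pnorm q x y = 0" by (simp add: pnorm_def)
qed

lemma pnorm_antimono:
  assumes q: "1 \<le> q" "q \<le> q'" and nn: "0 \<le> x" "0 \<le> y"
  shows "pnorm q' x y \<le> pnorm q x y"
proof (cases "x = 0 \<and> y = 0")
  case True then show ?thesis by (simp add: pnorm_def)
next
  case False
  define A where "A = pnorm q x y"
  have Ap: "A > 0" using False pnorm_eq_0_iff[OF q(1) nn] pnorm_nonneg[of q x y] unfolding A_def by linarith
  have q0: "q > 0" "q' > 0" using q by auto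
  have xa: "x / A \<le> 1" "y / A \<le> 1" using max_le_pnorm[OF q(1) nn] Ap unfolding A_def by auto
  have "(x / A) powr q' + (y / A) powr q' \<le> (x / A) powr q + (y / A) powr q"
    using xa nn Ap q by (intro add_mono powr_mono') auto
  also have "\<dots> = (x powr q + y powr q) / A powr q" by (simp add: powr_divide add_divide_distrib)
  also have "\<dots> = 1"
  proof -
    have "A powr q = x powr q + y powr q" unfolding A_def by (rule pnorm_powr[OF q0(1)])
    moreover have "A powr q > 0" using Ap by simp
    ultimately show ?thesis by simp
  qed
  finally have "(x powr q' + y powr q') / A powr q' \<le> 1" by (simp add: powr_divide add_divide_distrib)
  then have "x powr q' + y powr q' \<le> A powr q'" using Ap by (simp add: divide_le_eq)
  then have "pnorm q' x y \<le> (A powr q') powr (1/q')" unfolding pnorm_def using q0 by (intro powr_mono2) auto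
  also have "\<dots> = A" using Ap q0 by (simp add: powr_powr)
  finally show ?thesis unfolding A_def .
qed

lemma pnorm_le_powr_pnorm:
  assumes q: "1 \<le> q" "q \<le> q'" and nn: "0 \<le> x" "0 \<le> y"
  shows "pnorm q x y \<le> 2 powr (1/q - 1/q') * pnorm q' x y"
proof -
  have q0: "q > 0" "q' > 0" using q by auto
  define s where "s = q' / q"
  have s1: "s \<ge> 1" unfolding s_def using q by simp
  have "((1/2) * x powr q + (1 - 1/2) * y powr q) powr s \<le> (1/2) * (x powr q) powr s + (1 - 1/2) * (y powr q) powr s"
    by (rule powr_convex_combination[OF s1]) auto
  moreover have "(x powr q) powr s = x powr q'" "(y powr q) powr s = y powr q'"
    unfolding s_def using q0 by (simp_all add: powr_powr)
  ultimately have "((x powr q + y powr q) / 2) powr s \<le> (x powr q' + y powr q') / 2"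
    by (simp add: field_simps)
  then have "(((x powr q + y powr q) / 2) powr s) powr (1/q') \<le> ((x powr q' + y powr q') / 2) powr (1/q')"
    using q0 by (intro powr_mono2) auto
  moreover have "(((x powr q + y powr q) / 2) powr s) powr (1/q') = ((x powr q + y powr q) / 2) powr (1/q)"
    unfolding s_def using q0 by (simp add: powr_powr)
  ultimately have "((x powr q + y powr q) / 2) powr (1/q) \<le> ((x powr q' + y powr q') / 2) powr (1/q')" by simp
  then have "pnorm q x y / 2 powr (1/q) \<le> pnorm q' x y / 2 powr (1/q')"
    unfolding pnorm_def by (simp add: powr_divide)
  then have "pnorm q x y \<le> 2 powr (1/q) * (pnorm q' x y / 2 powr (1/q'))"
    by (simp add: divide_le_eq mult.commute)
  also have "\<dots> = 2 powr (1/q - 1/q') * pnorm q' x y" by (simp add: powr_diff)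
  finally show ?thesis .
qed

text \<open>pnorm_inv r is F_(1/r), including r = 0 for F_\<infinity> = max; in this parametrization the
  exponent ranges over the compact interval [0, 1].\<close>

definition pnorm_inv :: "real \<Rightarrow> real \<Rightarrow> real \<Rightarrow> real" where
  "pnorm_inv r x y = (if r = 0 then max x y else pnorm (1/r) x y)"

lemma max_le_pnorm_inv:
  assumes "0 \<le> r" "r \<le> 1" "0 \<le> x" "0 \<le> y"
  shows "max x y \<le> pnorm_inv r x y"
proof (cases "r = 0")
  case True then show ?thesis by (simp add: pnorm_inv_def)
next
  case False
  then have "1 \<le> 1/r" using assms by simp
  then show ?thesis using max_le_pnorm[of "1/r" x y] assms False by (simp add: pnorm_inv_def)
qed

lemma pnorm_inv_le_max:
  assumes "0 \<le> r" "r \<le> 1" "0 \<le> x" "0 \<le> y"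
  shows "pnorm_inv r x y \<le> 2 powr r * max x y"
proof (cases "r = 0")
  case True then show ?thesis by (simp add: pnorm_inv_def)
next
  case False then show ?thesis using pnorm_le_max[of "1/r" x y] assms by (simp add: pnorm_inv_def)
qed

lemma pnorm_inv_le_twice_max:
  assumes "0 \<le> r" "r \<le> 1" "0 \<le> x" "0 \<le> y"
  shows "pnorm_inv r x y \<le> 2 * max x y"
proof -
  have "2 powr r \<le> 2 powr 1" using assms by (intro powr_mono) auto
  then have "2 powr r * max x y \<le> 2 * max x y" using assms by (intro mult_right_mono) auto
  then show ?thesis using pnorm_inv_le_max[OF assms] by simp
qed

lemma pnorm_inv_compare:
  assumes r: "0 \<le> r2" "r2 \<le> r1" "r1 \<le> 1" and nn: "0 \<le> x" "0 \<le> y"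
  shows "pnorm_inv r2 x y \<le> pnorm_inv r1 x y \<and> pnorm_inv r1 x y \<le> 2 powr (r1 - r2) * pnorm_inv r2 x y"
proof (cases "r2 = 0")
  case True
  then show ?thesis using max_le_pnorm_inv[of r1 x y] pnorm_inv_le_max[of r1 x y] r nn by (simp add: pnorm_inv_def)
next
  case False
  then have r2p: "r2 > 0" using r by simp
  have q: "1 \<le> 1/r1" "1/r1 \<le> 1/r2" using r r2p by (auto simp: field_simps)
  have "pnorm_inv r2 x y \<le> pnorm_inv r1 x y" unfolding pnorm_inv_def using r2p r pnorm_antimono[OF q nn] by auto
  moreover have "pnorm_inv r1 x y \<le> 2 powr (r1 - r2) * pnorm_inv r2 x y"
    unfolding pnorm_inv_def using r2p r pnorm_le_powr_pnorm[OF q nn] by auto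
  ultimately show ?thesis ..
qed

lemma pnorm_inv_exponent_diff:
  assumes r: "0 \<le> r1" "r1 \<le> 1" "0 \<le> r2" "r2 \<le> 1" and nn: "0 \<le> x" "0 \<le> y"
  shows "\<bar>pnorm_inv r1 x y - pnorm_inv r2 x y\<bar> \<le> (2 powr \<bar>r1 - r2\<bar> - 1) * (2 * max x y)"
proof -
  have key: "\<bar>pnorm_inv a x y - pnorm_inv b x y\<bar> \<le> (2 powr \<bar>a - b\<bar> - 1) * (2 * max x y)"
    if ab: "0 \<le> b" "b \<le> a" "a \<le> 1" for a b
  proof -
    have c: "pnorm_inv b x y \<le> pnorm_inv a x y" "pnorm_inv a x y \<le> 2 powr (a - b) * pnorm_inv b x y" using pnorm_inv_compare[OF ab nn] by auto
    have f: "0 \<le> 2 powr (a - b) - 1" using ab by (simp add: ge_one_powr_ge_zero)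
    have "pnorm_inv b x y \<le> 2 * max x y" using pnorm_inv_le_twice_max[of b x y] ab nn by simp
    then have "(2 powr (a - b) - 1) * pnorm_inv b x y \<le> (2 powr (a - b) - 1) * (2 * max x y)"
      using f by (rule mult_left_mono)
    moreover have "\<bar>pnorm_inv a x y - pnorm_inv b x y\<bar> = pnorm_inv a x y - pnorm_inv b x y" using c by simp
    moreover have "pnorm_inv a x y - pnorm_inv b x y \<le> (2 powr (a - b) - 1) * pnorm_inv b x y" using c by (simp add: algebra_simps)
    ultimately show ?thesis using ab by simp
  qed
  show ?thesis
  proof (cases "r2 \<le> r1")
    case True then show ?thesis using key[of r2 r1] r by simp
  next
    case False then show ?thesis using key[of r1 r2] r by (simp add: abs_minus_commute)
  qed
qed

lemma pnorm_inv_mono: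
  assumes "0 \<le> r" "r \<le> 1" "0 \<le> x" "x \<le> x'" "0 \<le> y" "y \<le> y'"
  shows "pnorm_inv r x y \<le> pnorm_inv r x' y'"
  using assms pnorm_mono[of "1/r" x x' y y'] unfolding pnorm_inv_def by auto

lemma pnorm_inv_triangle:
  assumes r: "0 \<le> r" "r \<le> 1" and nn: "0 \<le> x" "0 \<le> y" "0 \<le> u" "0 \<le> v"
  shows "pnorm_inv r (x + u) (y + v) \<le> pnorm_inv r x y + pnorm_inv r u v"
proof (cases "r = 0")
  case True then show ?thesis unfolding pnorm_inv_def by (simp add: add_mono)
next
  case False then show ?thesis unfolding pnorm_inv_def using pnorm_triangle[of "1/r" x y u v] r nn by auto
qed

lemma pnorm_inv_le_lipschitz:
  assumes r: "0 \<le> r" "r \<le> 1" and nn: "0 \<le> x" "0 \<le> y" "0 \<le> x'" "0 \<le> y'"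
  shows "pnorm_inv r x y \<le> pnorm_inv r x' y' + 2 * max \<bar>x - x'\<bar> \<bar>y - y'\<bar>"
proof -
  have "pnorm_inv r x y \<le> pnorm_inv r (x' + \<bar>x - x'\<bar>) (y' + \<bar>y - y'\<bar>)" using r nn by (intro pnorm_inv_mono) auto
  also have "\<dots> \<le> pnorm_inv r x' y' + pnorm_inv r \<bar>x - x'\<bar> \<bar>y - y'\<bar>" using r nn by (intro pnorm_inv_triangle) auto
  also have "pnorm_inv r \<bar>x - x'\<bar> \<bar>y - y'\<bar> \<le> 2 * max \<bar>x - x'\<bar> \<bar>y - y'\<bar>" using r by (intro pnorm_inv_le_twice_max) auto
  finally show ?thesis by simp
qed

lemma pnorm_inv_lipschitz:
  assumes r: "0 \<le> r" "r \<le> 1" and nn: "0 \<le> x" "0 \<le> y" "0 \<le> x'" "0 \<le> y'"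
  shows "\<bar>pnorm_inv r x y - pnorm_inv r x' y'\<bar> \<le> 2 * max \<bar>x - x'\<bar> \<bar>y - y'\<bar>"
  using pnorm_inv_le_lipschitz[OF r nn] pnorm_inv_le_lipschitz[OF r nn(3,4,1,2)] by (simp add: abs_minus_commute abs_le_iff)

definition inv_exponent :: "ennreal \<Rightarrow> real" where "inv_exponent p = enn2real (inverse p)"

lemma inv_exponent_cases:
  assumes p: "1 \<le> p"
  shows "(p = \<infinity> \<and> inv_exponent p = 0 \<and> inverse p = 0) \<or> (\<exists>q. q \<ge> 1 \<and> p = ennreal q \<and> inv_exponent p = 1/q \<and> inverse p = ennreal (1/q))"
proof (cases "p = \<infinity>")
  case True then show ?thesis by (simp add: inv_exponent_def)
next
  case False
  then obtain q where q: "p = ennreal q" "q \<ge> 0" by (cases p) auto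
  have q1: "q \<ge> 1" using p q by simp
  have i: "inverse p = ennreal (1/q)" unfolding q(1) using q1 by (simp add: inverse_ennreal inverse_eq_divide)
  then have "inv_exponent p = 1 / q" unfolding inv_exponent_def using q1 by simp
  then show ?thesis using q q1 i by auto
qed

lemma inv_exponent_range: "1 \<le> p \<Longrightarrow> 0 \<le> inv_exponent p \<and> inv_exponent p \<le> 1"
  using inv_exponent_cases[of p] by auto

lemma inverse_eq_inv_exponent: "1 \<le> p \<Longrightarrow> inverse p = ennreal (inv_exponent p)"
  using inv_exponent_cases[of p] by auto

lemma Fp_eq_pnorm_inv:
  assumes p: "1 \<le> p"
  shows "Fp p s t = pnorm_inv (inv_exponent p) s t"
  using inv_exponent_cases[OF p]
proof
  assume h: "p = \<infinity> \<and> inv_exponent p = 0 \<and> inverse p = 0"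
  then have h0: "inv_exponent p = 0" by blast
  have "pnorm_inv (inv_exponent p) s t = max s t" by (simp only: pnorm_inv_def h0 if_True refl)
  then show ?thesis using h by (simp add: Fp_def)
next
  assume "\<exists>q. q \<ge> 1 \<and> p = ennreal q \<and> inv_exponent p = 1/q \<and> inverse p = ennreal (1/q)"
  then obtain q where q: "q \<ge> 1" "p = ennreal q" "inv_exponent p = 1/q" by auto
  then show ?thesis by (simp add: Fp_def pnorm_inv_def pnorm_def)
qed

lemma tendsto_inv_exponent:
  assumes lim: "pn \<longlonglongrightarrow> p" and pn: "\<forall>n. 1 \<le> pn n" and p: "1 \<le> p"
  shows "(\<lambda>n. inv_exponent (pn n)) \<longlonglongrightarrow> inv_exponent p"
proof -
  have c: "continuous_on UNIV (\<lambda>x::ennreal. inverse x)"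
    by (intro continuous_on_inverse_ennreal continuous_on_id)
  have "(\<lambda>n. inverse (pn n)) \<longlonglongrightarrow> inverse p"
    using continuous_on_tendsto_compose[OF c lim] by (simp add: o_def)
  then have "(\<lambda>n. inverse (pn n)) \<longlonglongrightarrow> ennreal (inv_exponent p)" using inverse_eq_inv_exponent[OF p] by simp
  then have "(\<lambda>n. enn2real (inverse (pn n))) \<longlonglongrightarrow> inv_exponent p"
    using inv_exponent_range[OF p] by (intro tendsto_enn2real) auto
  then show ?thesis unfolding inv_exponent_def .
qed

lemma Fp_perturbation:
  assumes p: "1 \<le> p" "1 \<le> q" and nn: "0 \<le> a" "0 \<le> b" "0 \<le> a'" "0 \<le> b'"
    and close: "\<bar>a - a'\<bar> \<le> \<epsilon>" "\<bar>b - b'\<bar> \<le> \<epsilon>" and bdd: "a' \<le> R" "b' \<le> R"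
  shows "\<bar>Fp q a b - Fp p a' b'\<bar> \<le> 2 * \<epsilon> + (2 powr \<bar>inv_exponent q - inv_exponent p\<bar> - 1) * (2 * R)"
proof -
  have r: "0 \<le> inv_exponent p" "inv_exponent p \<le> 1" "0 \<le> inv_exponent q" "inv_exponent q \<le> 1"
    using inv_exponent_range p by auto
  have "\<bar>pnorm_inv (inv_exponent q) a b - pnorm_inv (inv_exponent q) a' b'\<bar> \<le> 2 * max \<bar>a - a'\<bar> \<bar>b - b'\<bar>"
    using r nn by (intro pnorm_inv_lipschitz) auto
  also have "\<dots> \<le> 2 * \<epsilon>" using close by simp
  finally have "\<bar>pnorm_inv (inv_exponent q) a b - pnorm_inv (inv_exponent q) a' b'\<bar> \<le> 2 * \<epsilon>" .
  moreover have "\<bar>pnorm_inv (inv_exponent q) a' b' - pnorm_inv (inv_exponent p) a' b'\<bar>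
      \<le> (2 powr \<bar>inv_exponent q - inv_exponent p\<bar> - 1) * (2 * max a' b')"
    using r nn by (intro pnorm_inv_exponent_diff) auto
  moreover have "\<dots> \<le> (2 powr \<bar>inv_exponent q - inv_exponent p\<bar> - 1) * (2 * R)"
    using bdd by (intro mult_left_mono) (auto simp: ge_one_powr_ge_zero)
  ultimately show ?thesis
    unfolding Fp_eq_pnorm_inv[OF p(1)] Fp_eq_pnorm_inv[OF p(2)] by linarith
qed

section \<open>Metric preserving functions\<close>

lemma metric_preserving_0:
  assumes "metric_preserving F"
  shows "F 0 = 0"
proof -
  have "Metric_space {0::nat} (\<lambda>x y. 0)" by unfold_locales auto
  then have "Metric_space {0::nat} (\<lambda>x y. F 0)" using assms unfolding metric_preserving_def by blast
  then show ?thesis using Metric_space.zero[of "{0::nat}" "\<lambda>x y. F 0" 0 0] by simp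
qed

text \<open>Realize a, b, c as the side lengths of a triangle on the points 0, 1, 2.\<close>

lemma metric_preserving_triangle:
  assumes mp: "metric_preserving F" and pos: "0 < a" "0 < b" "0 < c"
    and t: "a \<le> b + c" "b \<le> a + c" "c \<le> a + b"
  shows "F a \<le> F b + F c"
proof -
  define d :: "nat \<Rightarrow> nat \<Rightarrow> real" where
    "d x y = (if x = y then 0 else if x + y = 1 then b else if x + y = 3 then c
      else if x + y = 2 then a else 1)" for x y
  have "Metric_space {0,1,2} d"
  proof
    show "0 \<le> d x y" for x y unfolding d_def using pos by auto
    show "d x y = d y x" for x y unfolding d_def by (simp add: add.commute eq_commute)
    show "x \<in> {0,1,2} \<Longrightarrow> y \<in> {0,1,2} \<Longrightarrow> d x y = 0 \<longleftrightarrow> x = y" for x y unfolding d_def using pos by auto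
    show "x \<in> {0,1,2} \<Longrightarrow> y \<in> {0,1,2} \<Longrightarrow> z \<in> {0,1,2} \<Longrightarrow> d x z \<le> d x y + d y z" for x y z
      unfolding d_def using pos t by auto
  qed
  then have "Metric_space {0,1,2} (\<lambda>x y. F (d x y))" using mp unfolding metric_preserving_def by blast
  then have "F (d 0 2) \<le> F (d 0 1) + F (d 1 2)" by (rule Metric_space.triangle) auto
  then show ?thesis unfolding d_def by simp
qed

lemma metric_preserving_abs_diff_le:
  assumes mp: "metric_preserving F" and nn: "\<And>x. 0 \<le> x \<Longrightarrow> 0 \<le> F x"
    and xy: "0 \<le> x" "0 \<le> y"
  shows "\<bar>F x - F y\<bar> \<le> F \<bar>x - y\<bar>"
proof -
  have k: "\<bar>F x - F y\<bar> \<le> F \<bar>x - y\<bar>" if "0 \<le> y" "y \<le> x" for x y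
  proof (cases "y = x")
    case True then show ?thesis using metric_preserving_0[OF mp] by simp
  next
    case False
    show ?thesis
    proof (cases "y = 0")
      case True then show ?thesis using metric_preserving_0[OF mp] nn that by simp
    next
      case False
      have "F x \<le> F y + F (x - y)"
        using metric_preserving_triangle[OF mp, of x y "x - y"] that False \<open>y \<noteq> x\<close> by auto
      moreover have "F y \<le> F x + F (x - y)"
        using metric_preserving_triangle[OF mp, of y x "x - y"] that False \<open>y \<noteq> x\<close> by auto
      ultimately show ?thesis using that by auto
    qed
  qed
  show ?thesis
  proof (cases "y \<le> x")
    case True then show ?thesis using k xy by simp
  next
    case False then show ?thesis using k[of x y] xy by (simp add: abs_minus_commute)
  qed
qed

lemma metric_preserving_le_double:
  assumes mp: "metric_preserving F" and nn: "\<And>x. 0 \<le> x \<Longrightarrow> 0 \<le> F x"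
    and x: "0 \<le> x" "x \<le> 2 * \<eta>" and e: "0 < \<eta>"
  shows "F x \<le> 2 * F \<eta>"
proof (cases "x = 0")
  case True then show ?thesis using metric_preserving_0[OF mp] nn[of \<eta>] e by simp
next
  case False then show ?thesis using metric_preserving_triangle[OF mp, of x \<eta> \<eta>] x e by auto
qed

lemma metric_preserving_perturbation:
  assumes mp: "metric_preserving F" and nn: "\<And>x. 0 \<le> x \<Longrightarrow> 0 \<le> F x"
    and ab: "0 \<le> a" "0 \<le> b" "\<bar>a - b\<bar> \<le> 2 * \<eta>" and \<eta>: "0 < \<eta>"
  shows "\<bar>F a - F b\<bar> \<le> 2 * F \<eta>"
  using metric_preserving_abs_diff_le[OF mp nn ab(1,2)]
    metric_preserving_le_double[OF mp nn _ ab(3) \<eta>] by simp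

lemma continuous_at_0_small:
  fixes F :: "real \<Rightarrow> real"
  assumes cF: "continuous_on {0..} F" and F0: "F 0 = (0::real)" and c: "0 < c"
  shows "\<exists>\<eta>>0. F \<eta> < c"
proof -
  have "(F \<longlongrightarrow> F 0) (at 0 within {0..})" using cF by (simp add: continuous_on_def)
  then have "eventually (\<lambda>x. F x < c) (at 0 within {0..})" using c F0 by (intro order_tendstoD) auto
  then obtain e where e: "e > 0" "\<And>x. x \<in> {0..} \<Longrightarrow> x \<noteq> 0 \<Longrightarrow> dist x 0 < e \<Longrightarrow> F x < c"
    unfolding eventually_at by auto
  then show ?thesis by (intro exI[of _ "e/2"]) auto
qed

lemma grid_point_near:
  assumes \<eta>: "0 < \<eta>" and b: "0 \<le> b" "b \<le> L"
  obtains k where "k \<le> nat \<lceil>L / \<eta>\<rceil>" "\<bar>b - real k * \<eta>\<bar> \<le> \<eta>"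
proof
  let ?k = "nat \<lfloor>b / \<eta>\<rfloor>"
  have "real ?k = of_int \<lfloor>b / \<eta>\<rfloor>" using \<eta> b by simp
  moreover have "of_int \<lfloor>b / \<eta>\<rfloor> * \<eta> \<le> b" "b < (of_int \<lfloor>b / \<eta>\<rfloor> + 1) * \<eta>"
    using \<eta> by (simp_all add: pos_le_divide_eq[symmetric] pos_divide_less_eq[symmetric])
  ultimately show "\<bar>b - real ?k * \<eta>\<bar> \<le> \<eta>" by (simp add: algebra_simps)
  have "b / \<eta> \<le> L / \<eta>" using b \<eta> by (simp add: divide_right_mono)
  then show "?k \<le> nat \<lceil>L / \<eta>\<rceil>" by (meson floor_le_ceiling floor_mono order_trans nat_mono)
qed

text \<open>Subadditivity on distances reduces the supremum over [0, L] to a finite grid of mesh \<eta>,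
  up to an error 2 F_n \<eta> + 2 F \<eta>, which is small once F \<eta> is.\<close>

lemma metric_preserving_uniform_convergence:
  fixes Fn :: "nat \<Rightarrow> real \<Rightarrow> real" and F :: "real \<Rightarrow> real"
  assumes mpn: "\<And>n. metric_preserving (Fn n)" and nnn: "\<And>n x. 0 \<le> x \<Longrightarrow> 0 \<le> Fn n x"
    and mp: "metric_preserving F" and nn: "\<And>x. 0 \<le> x \<Longrightarrow> 0 \<le> F x"
    and cF: "continuous_on {0..} F" and conv: "\<And>t. 0 \<le> t \<Longrightarrow> (\<lambda>n. Fn n t) \<longlonglongrightarrow> F t"
    and \<rho>: "0 < \<rho>"
  shows "\<forall>\<^sub>F n in sequentially. \<forall>b\<in>{0..L}. \<bar>Fn n b - F b\<bar> \<le> \<rho>"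
proof -
  obtain \<eta> where \<eta>: "0 < \<eta>" "F \<eta> < \<rho> / 8"
    using continuous_at_0_small[OF cF metric_preserving_0[OF mp], of "\<rho> / 8"] \<rho> by auto
  define N where "N = nat \<lceil>L / \<eta>\<rceil>"
  have "\<forall>\<^sub>F n in sequentially. Fn n \<eta> < \<rho> / 8"
    using conv[of \<eta>] \<eta> by (intro order_tendstoD) auto
  moreover have "\<forall>\<^sub>F n in sequentially. \<forall>k\<in>{..N}. \<bar>Fn n (real k * \<eta>) - F (real k * \<eta>)\<bar> < \<rho> / 4"
  proof (intro eventually_ball_finite ballI)
    fix k :: nat
    have "(\<lambda>n. Fn n (real k * \<eta>)) \<longlonglongrightarrow> F (real k * \<eta>)" using conv \<eta>(1) by simp
    from tendstoD[OF this, of "\<rho> / 4"] \<rho>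
    show "\<forall>\<^sub>F n in sequentially. \<bar>Fn n (real k * \<eta>) - F (real k * \<eta>)\<bar> < \<rho> / 4"
      by (simp add: dist_real_def)
  qed simp
  ultimately show ?thesis
  proof eventually_elim
    case (elim n)
    show ?case
    proof
      fix b assume b: "b \<in> {0..L}"
      then obtain k where k: "k \<le> N" "\<bar>b - real k * \<eta>\<bar> \<le> \<eta>"
        using grid_point_near[OF \<eta>(1)] unfolding N_def by auto
      have nonneg: "0 \<le> b" "0 \<le> real k * \<eta>" and close: "\<bar>b - real k * \<eta>\<bar> \<le> 2 * \<eta>"
        using b k(2) \<eta>(1) by auto
      have "\<bar>Fn n b - Fn n (real k * \<eta>)\<bar> \<le> 2 * Fn n \<eta>"
        by (rule metric_preserving_perturbation[OF mpn nnn nonneg close \<eta>(1)])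
      moreover have "\<bar>F b - F (real k * \<eta>)\<bar> \<le> 2 * F \<eta>"
        by (rule metric_preserving_perturbation[OF mp nn nonneg close \<eta>(1)])
      moreover have "\<bar>Fn n (real k * \<eta>) - F (real k * \<eta>)\<bar> < \<rho> / 4"
        using elim(2) k(1) by blast
      ultimately show "\<bar>Fn n b - F b\<bar> \<le> \<rho>"
        using elim(1) \<eta>(2) by linarith
    qed
  qed
qed

section \<open>Convergence of the transformed spaces\<close>

theorem box_converges_metric_preserving:
  fixes dXn :: "nat \<Rightarrow> 'a \<Rightarrow> 'a \<Rightarrow> real" and dX :: "'b \<Rightarrow> 'b \<Rightarrow> real"
  assumes mmn: "\<And>n. mm_space (dXn n) (mXn n)" and mm: "mm_space dX mX"
    and conv: "box_converges dXn mXn dX mX"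
    and mpn: "\<And>n. metric_preserving (Fn n)" and nnn: "\<And>n x. 0 \<le> x \<Longrightarrow> 0 \<le> Fn n x"
    and mp: "metric_preserving F" and nn: "\<And>x. 0 \<le> x \<Longrightarrow> 0 \<le> F x"
    and cF: "continuous_on {0..} F" and lim: "\<And>t. 0 \<le> t \<Longrightarrow> (\<lambda>n. Fn n t) \<longlonglongrightarrow> F t"
  shows "box_converges (\<lambda>n x y. Fn n (dXn n x y)) mXn (\<lambda>x y. F (dX x y)) mX"
proof (rule box_convergesI)
  show "(\<forall>\<^sub>F n in sequentially. box_admissible (mXn n) mX) \<or> Inf ({} :: real set) = 0"
    by (rule box_converges_admissible[OF conv])
  fix \<rho> :: real assume \<rho>: "0 < \<rho>"
  obtain \<eta> where \<eta>: "0 < \<eta>" "F \<eta> < \<rho> / 8"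
    using continuous_at_0_small[OF cF metric_preserving_0[OF mp], of "\<rho> / 8"] \<rho> by auto
  define \<delta> where "\<delta> = min (\<rho> / 2) (2 * \<eta>)"
  have \<delta>: "0 < \<delta>" "\<delta> \<le> \<rho>" "\<delta> \<le> 2 * \<eta>" using \<rho> \<eta> unfolding \<delta>_def by auto
  obtain R where R: "\<forall>\<^sub>F n in sequentially. box_admissible (mXn n) mX \<longrightarrow>
    (\<exists>\<phi>n \<phi> A. parameter (mXn n) \<phi>n \<and> parameter mX \<phi> \<and> A \<in> sets unitI \<and> measure unitI A \<ge> 1 - \<delta> \<and>
      (\<forall>s\<in>A. \<forall>t\<in>A. \<bar>dXn n (\<phi>n s) (\<phi>n t) - dX (\<phi> s) (\<phi> t)\<bar> \<le> \<delta> \<and> dX (\<phi> s) (\<phi> t) \<le> R))"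
    using box_converges_almost_isometric_parameters[OF mm conv \<delta>(1)] ..
  have unif: "\<forall>\<^sub>F n in sequentially. \<forall>a\<in>{0..R + 2 * \<eta>}. \<bar>Fn n a - F a\<bar> \<le> \<rho> / 4"
    using \<rho> by (intro metric_preserving_uniform_convergence[OF mpn nnn mp nn cF lim]) auto
  from R unif show "\<forall>\<^sub>F n in sequentially. box_admissible (mXn n) mX \<longrightarrow>
      box (\<lambda>x y. Fn n (dXn n x y)) (mXn n) (\<lambda>x y. F (dX x y)) mX \<le> \<rho>"
  proof eventually_elim
    case (elim n)
    show ?case
    proof
      assume "box_admissible (mXn n) mX"
      then obtain \<phi>n \<phi> A where A: "parameter (mXn n) \<phi>n" "parameter mX \<phi>" "A \<in> sets unitI"
        "measure unitI A \<ge> 1 - \<delta>"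
        "\<forall>s\<in>A. \<forall>t\<in>A. \<bar>dXn n (\<phi>n s) (\<phi>n t) - dX (\<phi> s) (\<phi> t)\<bar> \<le> \<delta> \<and> dX (\<phi> s) (\<phi> t) \<le> R"
        using elim(1) by blast
      show "box (\<lambda>x y. Fn n (dXn n x y)) (mXn n) (\<lambda>x y. F (dX x y)) mX \<le> \<rho>"
      proof (rule box_le[OF _ A(1-3)])
        show "0 \<le> \<rho>" "1 - \<rho> \<le> measure unitI A" using \<rho> \<delta>(2) A(4) by auto
        fix s t assume "s \<in> A" "t \<in> A"
        then have close: "\<bar>dXn n (\<phi>n s) (\<phi>n t) - dX (\<phi> s) (\<phi> t)\<bar> \<le> \<delta>" and bdd: "dX (\<phi> s) (\<phi> t) \<le> R"
          using A(5) by auto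
        have nonneg: "0 \<le> dXn n (\<phi>n s) (\<phi>n t)" "0 \<le> dX (\<phi> s) (\<phi> t)"
          using mm_space_nonneg[OF mmn] mm_space_nonneg[OF mm] by auto
        then have "\<bar>Fn n (dXn n (\<phi>n s) (\<phi>n t)) - F (dXn n (\<phi>n s) (\<phi>n t))\<bar> \<le> \<rho> / 4"
          using elim(2) close bdd \<delta>(3) by auto
        moreover have "\<bar>dXn n (\<phi>n s) (\<phi>n t) - dX (\<phi> s) (\<phi> t)\<bar> \<le> 2 * \<eta>"
          using close \<delta>(3) by linarith
        with metric_preserving_perturbation[OF mp nn nonneg _ \<eta>(1)]
        have "\<bar>F (dXn n (\<phi>n s) (\<phi>n t)) - F (dX (\<phi> s) (\<phi> t))\<bar> \<le> 2 * F \<eta>" by blast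
        ultimately show "\<bar>Fn n (dXn n (\<phi>n s) (\<phi>n t)) - F (dX (\<phi> s) (\<phi> t))\<bar> \<le> \<rho>"
          using \<eta>(2) by linarith
      qed
    qed
  qed
qed

theorem box_converges_lp_product:
  fixes dXn :: "nat \<Rightarrow> 'a \<Rightarrow> 'a \<Rightarrow> real" and dX :: "'b \<Rightarrow> 'b \<Rightarrow> real"
    and dYn :: "nat \<Rightarrow> 'c \<Rightarrow> 'c \<Rightarrow> real" and dY :: "'d \<Rightarrow> 'd \<Rightarrow> real"
  assumes mmXn: "\<And>n. mm_space (dXn n) (mXn n)" and mmX: "mm_space dX mX"
    and mmYn: "\<And>n. mm_space (dYn n) (mYn n)" and mmY: "mm_space dY mY"
    and convX: "box_converges dXn mXn dX mX" and convY: "box_converges dYn mYn dY mY"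
    and pn: "\<And>n. 1 \<le> pn n" and p: "1 \<le> p" and lim: "pn \<longlonglongrightarrow> p"
  shows "box_converges (\<lambda>n. prod_dist (pn n) (dXn n) (dYn n)) (\<lambda>n. mXn n \<Otimes>\<^sub>M mYn n)
    (prod_dist p dX dY) (mX \<Otimes>\<^sub>M mY)"
proof (rule box_convergesI)
  have prob: "prob_space mX" "prob_space mY" "prob_space (mXn n)" "prob_space (mYn n)" for n
    using mmX mmY mmXn mmYn unfolding mm_space_def by auto
  have adm_iff: "box_admissible (mXn n \<Otimes>\<^sub>M mYn n) (mX \<Otimes>\<^sub>M mY) \<longleftrightarrow>
      box_admissible (mXn n) mX \<and> box_admissible (mYn n) mY" for n
    using prob by (intro box_admissible_pair_iff) auto
  show "(\<forall>\<^sub>F n in sequentially. box_admissible (mXn n \<Otimes>\<^sub>M mYn n) (mX \<Otimes>\<^sub>M mY)) \<or> Inf ({} :: real set) = 0"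
    using box_converges_admissible[OF convX] box_converges_admissible[OF convY]
    unfolding adm_iff by (auto intro: eventually_conj)
  fix \<rho> :: real assume \<rho>: "0 < \<rho>"
  obtain R1 where R1: "\<forall>\<^sub>F n in sequentially. box_admissible (mXn n) mX \<longrightarrow>
    (\<exists>\<phi>n \<phi> A. parameter (mXn n) \<phi>n \<and> parameter mX \<phi> \<and> A \<in> sets unitI \<and> measure unitI A \<ge> 1 - \<rho> / 8 \<and>
      (\<forall>s\<in>A. \<forall>t\<in>A. \<bar>dXn n (\<phi>n s) (\<phi>n t) - dX (\<phi> s) (\<phi> t)\<bar> \<le> \<rho> / 8 \<and> dX (\<phi> s) (\<phi> t) \<le> R1))"
    using box_converges_almost_isometric_parameters[OF mmX convX, of "\<rho> / 8"] \<rho> by auto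
  obtain R2 where R2: "\<forall>\<^sub>F n in sequentially. box_admissible (mYn n) mY \<longrightarrow>
    (\<exists>\<psi>n \<psi> B. parameter (mYn n) \<psi>n \<and> parameter mY \<psi> \<and> B \<in> sets unitI \<and> measure unitI B \<ge> 1 - \<rho> / 8 \<and>
      (\<forall>s\<in>B. \<forall>t\<in>B. \<bar>dYn n (\<psi>n s) (\<psi>n t) - dY (\<psi> s) (\<psi> t)\<bar> \<le> \<rho> / 8 \<and> dY (\<psi> s) (\<psi> t) \<le> R2))"
    using box_converges_almost_isometric_parameters[OF mmY convY, of "\<rho> / 8"] \<rho> by auto
  define C where "C = 2 * (\<bar>R1\<bar> + \<bar>R2\<bar>)"
  have "(\<lambda>n. (2 powr \<bar>inv_exponent (pn n) - inv_exponent p\<bar> - 1) * C) \<longlonglongrightarrow> (2 powr \<bar>inv_exponent p - inv_exponent p\<bar> - 1) * C"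
    using tendsto_inv_exponent[OF lim] pn p by (intro tendsto_intros) auto
  then have "\<forall>\<^sub>F n in sequentially. (2 powr \<bar>inv_exponent (pn n) - inv_exponent p\<bar> - 1) * C < \<rho> / 4"
    using \<rho> by (intro order_tendstoD) auto
  with R1 R2 show "\<forall>\<^sub>F n in sequentially. box_admissible (mXn n \<Otimes>\<^sub>M mYn n) (mX \<Otimes>\<^sub>M mY) \<longrightarrow>
      box (prod_dist (pn n) (dXn n) (dYn n)) (mXn n \<Otimes>\<^sub>M mYn n) (prod_dist p dX dY) (mX \<Otimes>\<^sub>M mY) \<le> \<rho>"
  proof eventually_elim
    case (elim n)
    show ?case
    proof
      assume "box_admissible (mXn n \<Otimes>\<^sub>M mYn n) (mX \<Otimes>\<^sub>M mY)"
      then have "box_admissible (mXn n) mX" "box_admissible (mYn n) mY" using adm_iff by auto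
      then obtain \<phi>n \<phi> A \<psi>n \<psi> B where
        X: "parameter (mXn n) \<phi>n" "parameter mX \<phi>" "A \<in> sets unitI" "measure unitI A \<ge> 1 - \<rho> / 8"
          "\<forall>s\<in>A. \<forall>t\<in>A. \<bar>dXn n (\<phi>n s) (\<phi>n t) - dX (\<phi> s) (\<phi> t)\<bar> \<le> \<rho> / 8 \<and> dX (\<phi> s) (\<phi> t) \<le> R1"
        and Y: "parameter (mYn n) \<psi>n" "parameter mY \<psi>" "B \<in> sets unitI" "measure unitI B \<ge> 1 - \<rho> / 8"
          "\<forall>s\<in>B. \<forall>t\<in>B. \<bar>dYn n (\<psi>n s) (\<psi>n t) - dY (\<psi> s) (\<psi> t)\<bar> \<le> \<rho> / 8 \<and> dY (\<psi> s) (\<psi> t) \<le> R2"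
        using elim(1,2) by blast
      define K where "K = {s\<in>I01. unpair_digits s \<in> A \<times> B}"
      have "K = unpair_digits -` (A \<times> B) \<inter> space unitI" unfolding K_def by auto
      then have K: "K \<in> sets unitI"
        using measurable_sets[OF unpair_digits_measurable, of "A \<times> B"] X(3) Y(3) by simp
      interpret U: prob_space unitI by (rule prob_space_unitI)
      have "measure unitI K = measure unitI A * measure unitI B"
        unfolding K_def by (rule measure_unpair_digits_vimage_Times_unitI[OF X(3) Y(3)])
      moreover have "measure unitI A * measure unitI B \<ge> measure unitI A + measure unitI B - 1"
        using U.prob_le_1[of A] U.prob_le_1[of B] mult_nonneg_nonneg[of "1 - measure unitI A" "1 - measure unitI B"]
        by (simp add: algebra_simps)
      ultimately have K_measure: "measure unitI K \<ge> 1 - \<rho>"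
        using X(4) Y(4) \<rho> by linarith
      show "box (prod_dist (pn n) (dXn n) (dYn n)) (mXn n \<Otimes>\<^sub>M mYn n) (prod_dist p dX dY) (mX \<Otimes>\<^sub>M mY) \<le> \<rho>"
      proof (rule box_le[OF _ parameter_pair[OF X(1) Y(1)] parameter_pair[OF X(2) Y(2)] K K_measure])
        show "0 \<le> \<rho>" "sigma_finite_measure (mYn n)" "sigma_finite_measure mY"
          using \<rho> prob by (auto intro: prob_space_imp_sigma_finite)
        fix s t assume "s \<in> K" "t \<in> K"
        then obtain u v u' v' where uv: "unpair_digits s = (u, v)" "unpair_digits t = (u', v')"
          "u \<in> A" "u' \<in> A" "v \<in> B" "v' \<in> B"
          unfolding K_def by (metis (no_types, lifting) SigmaE mem_Collect_eq)
        have "\<bar>dXn n (\<phi>n u) (\<phi>n u') - dX (\<phi> u) (\<phi> u')\<bar> \<le> \<rho> / 8" "dX (\<phi> u) (\<phi> u') \<le> R1"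
          using X(5) uv(3,4) by blast+
        moreover have "\<bar>dYn n (\<psi>n v) (\<psi>n v') - dY (\<psi> v) (\<psi> v')\<bar> \<le> \<rho> / 8" "dY (\<psi> v) (\<psi> v') \<le> R2"
          using Y(5) uv(5,6) by blast+
        ultimately have "\<bar>Fp (pn n) (dXn n (\<phi>n u) (\<phi>n u')) (dYn n (\<psi>n v) (\<psi>n v'))
            - Fp p (dX (\<phi> u) (\<phi> u')) (dY (\<psi> v) (\<psi> v'))\<bar>
            \<le> 2 * (\<rho> / 8) + (2 powr \<bar>inv_exponent (pn n) - inv_exponent p\<bar> - 1) * C"
          unfolding C_def using pn p
          by (intro Fp_perturbation) (auto intro: mm_space_nonneg mmXn mmYn mmX mmY)
        also have "\<dots> \<le> \<rho>" using elim(3) \<rho> by linarith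
        finally show "\<bar>prod_dist (pn n) (dXn n) (dYn n) (((\<lambda>(u, v). (\<phi>n u, \<psi>n v)) \<circ> unpair_digits) s)
            (((\<lambda>(u, v). (\<phi>n u, \<psi>n v)) \<circ> unpair_digits) t)
          - prod_dist p dX dY (((\<lambda>(u, v). (\<phi> u, \<psi> v)) \<circ> unpair_digits) s)
            (((\<lambda>(u, v). (\<phi> u, \<psi> v)) \<circ> unpair_digits) t)\<bar> \<le> \<rho>"
          using uv(1,2) by (simp add: prod_dist_def)
      qed
    qed
  qed
qed

theorem mainTheorem14:
  shows "(\<forall>(dXn :: nat \<Rightarrow> 'a \<Rightarrow> 'a \<Rightarrow> real) mXn (dX :: 'b \<Rightarrow> 'b \<Rightarrow> real) mX
            (dYn :: nat \<Rightarrow> 'c \<Rightarrow> 'c \<Rightarrow> real) mYn (dY :: 'd \<Rightarrow> 'd \<Rightarrow> real) mY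
            (pn :: nat \<Rightarrow> ennreal) (p :: ennreal).
            (\<forall>n. mm_space (dXn n) (mXn n)) \<and> mm_space dX mX \<and>
            (\<forall>n. mm_space (dYn n) (mYn n)) \<and> mm_space dY mY \<and>
            box_converges dXn mXn dX mX \<and> box_converges dYn mYn dY mY \<and>
            (\<forall>n. 1 \<le> pn n) \<and> 1 \<le> p \<and> pn \<longlonglongrightarrow> p
          \<longrightarrow> box_converges (\<lambda>n. prod_dist (pn n) (dXn n) (dYn n)) (\<lambda>n. mXn n \<Otimes>\<^sub>M mYn n)
                             (prod_dist p dX dY) (mX \<Otimes>\<^sub>M mY))
       \<and>
       (\<forall>(dXn :: nat \<Rightarrow> 'e \<Rightarrow> 'e \<Rightarrow> real) mXn (dX :: 'f \<Rightarrow> 'f \<Rightarrow> real) mX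
            (Fn :: nat \<Rightarrow> real \<Rightarrow> real) (F :: real \<Rightarrow> real).
            (\<forall>n. mm_space (dXn n) (mXn n)) \<and> mm_space dX mX \<and>
            box_converges dXn mXn dX mX \<and>
            (\<forall>n. continuous_on {0..} (Fn n) \<and> Fn n ` {0..} \<subseteq> {0..} \<and> metric_preserving (Fn n)) \<and>
            continuous_on {0..} F \<and> F ` {0..} \<subseteq> {0..} \<and> metric_preserving F \<and>
            (\<forall>t\<ge>0. (\<lambda>n. Fn n t) \<longlonglongrightarrow> F t)
          \<longrightarrow> box_converges (\<lambda>n x y. Fn n (dXn n x y)) mXn (\<lambda>x y. F (dX x y)) mX)"
proof (intro conjI allI impI; elim conjE)
  show "box_converges (\<lambda>n. prod_dist (pn n) (dXn n) (dYn n)) (\<lambda>n. mXn n \<Otimes>\<^sub>M mYn n) (prod_dist p dX dY) (mX \<Otimes>\<^sub>M mY)"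
    if "\<forall>n. mm_space (dXn n) (mXn n)" "mm_space dX mX" "\<forall>n. mm_space (dYn n) (mYn n)" "mm_space dY mY"
      "box_converges dXn mXn dX mX" "box_converges dYn mYn dY mY" "\<forall>n. 1 \<le> pn n" "1 \<le> p" "pn \<longlonglongrightarrow> p"
    for dXn :: "nat \<Rightarrow> 'a \<Rightarrow> 'a \<Rightarrow> real" and mXn and dX :: "'b \<Rightarrow> 'b \<Rightarrow> real" and mX
      and dYn :: "nat \<Rightarrow> 'c \<Rightarrow> 'c \<Rightarrow> real" and mYn and dY :: "'d \<Rightarrow> 'd \<Rightarrow> real" and mY and pn p
    using that by (intro box_converges_lp_product) blast+
  show "box_converges (\<lambda>n x y. Fn n (dXn n x y)) mXn (\<lambda>x y. F (dX x y)) mX"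
    if mm: "\<forall>n. mm_space (dXn n) (mXn n)" "mm_space dX mX" and conv: "box_converges dXn mXn dX mX"
      and Fn: "\<forall>n. continuous_on {0..} (Fn n) \<and> Fn n ` {0..} \<subseteq> {0..} \<and> metric_preserving (Fn n)"
      and F: "continuous_on {0..} F" "F ` {0..} \<subseteq> {0..}" "metric_preserving F"
      and lim: "\<forall>t\<ge>0. (\<lambda>n. Fn n t) \<longlonglongrightarrow> F t"
    for dXn :: "nat \<Rightarrow> 'e \<Rightarrow> 'e \<Rightarrow> real" and mXn and dX :: "'f \<Rightarrow> 'f \<Rightarrow> real" and mX and Fn F
  proof (rule box_converges_metric_preserving[OF _ mm(2) conv _ _ F(3) _ F(1)])
    show "mm_space (dXn n) (mXn n)" "metric_preserving (Fn n)" for n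
      using mm(1) Fn by blast+
    show "0 \<le> Fn n x" "0 \<le> F x" if "0 \<le> x" for n x
      using Fn F(2) that by (auto simp: image_subset_iff)
    show "(\<lambda>n. Fn n t) \<longlonglongrightarrow> F t" if "0 \<le> t" for t
      using lim that by blast
  qed
qed

end
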